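(* Let $G$ be the non-abelian group of order $27$ and exponent $3$. Every sequence of length $33$ over $G$ contains a product-one subsequence of length $27$. Consequently $\mathsf{E}(G)=33$, and in particular $\mathsf{E}(G)=\mathsf{d}(G)+|G|$.
   Context: A sequence over $G$ is a finite unordered list (multiset) of elements of $G$; a subsequence is a sub-multiset; a non-empty sequence is product-one if some ordering of its terms has product $1$. The Gao constant $\mathsf{E}(G)$ is the least integer $N$ such that every sequence over $G$ of length at least $N$ has a product-one subsequence of length $|G|$. The small Davenport constant $\mathsf{d}(G)$ is the maximal length of a sequence over $G$ with no non-empty product-one subsequence. *)

theory Defs
  imports "HOL-Algebra.Coset" "HOL-Library.Multiset"
begin

definition seq_over :: "('a, 'b) monoid_scheme \<Rightarrow> 'a multiset \<Rightarrow> bool" where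
  "seq_over G M \<longleftrightarrow> set_mset M \<subseteq> carrier G"

definition product_one :: "('a, 'b) monoid_scheme \<Rightarrow> 'a multiset \<Rightarrow> bool" where
  "product_one G M \<longleftrightarrow> M \<noteq> {#} \<and>
     (\<exists>xs. mset xs = M \<and> foldr (\<lambda>x y. x \<otimes>\<^bsub>G\<^esub> y) xs \<one>\<^bsub>G\<^esub> = \<one>\<^bsub>G\<^esub>)"

definition gao_constant :: "('a, 'b) monoid_scheme \<Rightarrow> nat" where
  "gao_constant G = (LEAST N. \<forall>M. seq_over G M \<and> size M \<ge> N \<longrightarrow>
       (\<exists>S. S \<subseteq># M \<and> size S = order G \<and> product_one G S))"

definition small_davenport :: "('a, 'b) monoid_scheme \<Rightarrow> nat" where
  "small_davenport G = Max {size M | M. seq_over G M \<and>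
       \<not> (\<exists>S. S \<subseteq># M \<and> product_one G S)}"

end

theory Submission
  imports Defs "HOL-Library.Numeral_Type"
begin

text \<open>A non-abelian group of order 27 and exponent 3 is isomorphic to the Heisenberg group over
  \<open>\<int>/3\<close>, modelled on triples \<open>(a, b, c)\<close>. A sequence has a product-one ordering only if its
  \<open>a\<close>- and \<open>b\<close>-sums vanish, and then the \<open>c\<close>-coordinate of the product changes by the
  symplectic form \<open>b\<^sub>p a\<^sub>q - b\<^sub>q a\<^sub>p\<close> whenever adjacent terms \<open>p, q\<close> are swapped.
  The Chevalley--Warning theorem over \<open>\<int>/3\<close>, applied to the indicator polynomials of the three
  sums and of the size 27, gives among any 33 terms 27 whose \<open>a\<close>-, \<open>b\<close>- and
  \<open>\<psi>\<close>-sums vanish, where \<open>\<psi> = c + ab\<close>. If these 27 terms contain two disjoint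
  non-commuting pairs, swaps reach \<open>c = 0\<close>; if they commute pairwise, the product is the
  \<open>\<psi>\<close>-sum; in the remaining configuration of three non-commuting and 24 central terms, the
  six unused terms provide a repair. The sequence \<open>e\<^sub>1\<^sup>2 e\<^sub>2\<^sup>2 e\<^sub>3\<^sup>2\<close> has no product-one
  subsequence, which gives \<open>E(G) \<ge> 33\<close> and \<open>d(G) = 6\<close>.\<close>

section \<open>Product-one sequences in general groups\<close>

definition gao_property :: "('a, 'b) monoid_scheme \<Rightarrow> nat \<Rightarrow> bool" where
  "gao_property G N \<longleftrightarrow> (\<forall>M. seq_over G M \<and> size M \<ge> N \<longrightarrow>
     (\<exists>S. S \<subseteq># M \<and> size S = order G \<and> product_one G S))"

definition product_one_free :: "('a, 'b) monoid_scheme \<Rightarrow> 'a multiset \<Rightarrow> bool" where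
  "product_one_free G M \<longleftrightarrow> \<not> (\<exists>S. S \<subseteq># M \<and> product_one G S)"

lemma exists_submset_size:
  assumes "k \<le> size M" shows "\<exists>S. S \<subseteq># M \<and> size S = k"
proof -
  obtain xs where xs: "mset xs = M" using ex_mset by blast
  have "M = mset (take k xs) + mset (drop k xs)"
    unfolding xs[symmetric] mset_append[symmetric] by simp
  then have "mset (take k xs) \<subseteq># M" by (metis mset_subset_eq_add_left)
  moreover have "size (mset (take k xs)) = k" using assms xs by auto
  ultimately show ?thesis by blast
qed

lemma seq_over_submset: "seq_over G M \<Longrightarrow> S \<subseteq># M \<Longrightarrow> seq_over G S"
  unfolding seq_over_def using set_mset_mono by blast

lemma gao_propertyI:
  assumes "\<And>M. seq_over G M \<Longrightarrow> size M = N \<Longrightarrow> \<exists>S. S \<subseteq># M \<and> size S = order G \<and> product_one G S"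
  shows "gao_property G N"
  unfolding gao_property_def
proof (intro allI impI)
  fix M assume M: "seq_over G M \<and> N \<le> size M"
  then obtain M' where M': "M' \<subseteq># M" "size M' = N" using exists_submset_size by blast
  have "seq_over G M'" using M M'(1) seq_over_submset by blast
  then obtain S where S: "S \<subseteq># M'" "size S = order G" "product_one G S" using assms M'(2) by blast
  have "S \<subseteq># M" using S(1) M'(1) by (rule subset_mset.order_trans)
  with S(2,3) show "\<exists>S. S \<subseteq># M \<and> size S = order G \<and> product_one G S" by blast
qed

lemma gao_property_mono: "gao_property G N \<Longrightarrow> N \<le> N' \<Longrightarrow> gao_property G N'"
  unfolding gao_property_def using order_trans by blast

lemma gao_constant_eqI:
  assumes "gao_property G (Suc n)" "\<not> gao_property G n"
  shows "gao_constant G = Suc n"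
  unfolding gao_constant_def gao_property_def[symmetric]
proof (rule Least_equality)
  fix N assume "gao_property G N"
  show "Suc n \<le> N"
  proof (rule ccontr)
    assume "\<not> Suc n \<le> N"
    then have "N \<le> n" by simp
    with gao_property_mono[OF \<open>gao_property G N\<close>] assms(2) show False by blast
  qed
qed (rule assms(1))

lemma small_davenport_eqI:
  assumes "seq_over G M0" "product_one_free G M0"
    and "\<And>M. seq_over G M \<Longrightarrow> product_one_free G M \<Longrightarrow> size M \<le> size M0"
  shows "small_davenport G = size M0"
proof -
  let ?D = "{size M | M. seq_over G M \<and> product_one_free G M}"
  have "finite ?D" by (rule finite_subset[of _ "{..size M0}"]) (use assms(3) in auto)
  then have "Max ?D = size M0" by (rule Max_eqI) (use assms in auto)
  then show ?thesis unfolding small_davenport_def product_one_free_def .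
qed

context monoid
begin

lemma foldr_mult_closed: "set xs \<subseteq> carrier G \<Longrightarrow> foldr (\<otimes>) xs \<one> \<in> carrier G"
  by (induct xs) auto

lemma foldr_mult_filter_one:
  "set xs \<subseteq> carrier G \<Longrightarrow> foldr (\<otimes>) (filter (\<lambda>s. s \<noteq> \<one>) xs) \<one> = foldr (\<otimes>) xs \<one>"
  by (induct xs) (auto simp: foldr_mult_closed)

lemma product_one_filter_one:
  assumes "set_mset S \<subseteq> carrier G" "product_one G S" "filter_mset (\<lambda>s. s \<noteq> \<one>) S \<noteq> {#}"
  shows "product_one G (filter_mset (\<lambda>s. s \<noteq> \<one>) S)"
proof -
  obtain xs where "mset xs = S" "foldr (\<otimes>) xs \<one> = \<one>"
    using assms(2) unfolding product_one_def by blast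
  with assms show ?thesis
    unfolding product_one_def
    by (intro conjI exI[of _ "filter (\<lambda>s. s \<noteq> \<one>) xs"]) (auto simp: foldr_mult_filter_one)
qed

lemma one_not_in_product_one_free:
  assumes "product_one_free G M" shows "\<one> \<notin># M"
proof
  assume "\<one> \<in># M"
  moreover have "product_one G {#\<one>#}"
    unfolding product_one_def by (intro conjI exI[of _ "[\<one>]"]) auto
  ultimately show False using assms unfolding product_one_free_def by auto
qed

text \<open>Removing the padding ones from a product-one subsequence leaves a nonempty one.\<close>
lemma not_product_one_free_padded:
  assumes "seq_over G M" "\<one> \<notin># M" "S \<subseteq># M + replicate_mset k \<one>"
    and "product_one G S" "k < size S"
  shows "\<not> product_one_free G M"
proof -
  let ?S' = "filter_mset (\<lambda>s. s \<noteq> \<one>) S"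
  have "filter_mset (\<lambda>s. s \<noteq> \<one>) M = M"
    using assms(2) by (induct M) auto
  then have "filter_mset (\<lambda>s. s \<noteq> \<one>) (M + replicate_mset k \<one>) = M" by (induct k) simp_all
  then have sub: "?S' \<subseteq># M"
    using multiset_filter_mono[OF assms(3), of "\<lambda>s. s \<noteq> \<one>"] by simp
  have "count S \<one> \<le> k"
    using mset_subset_eq_count[OF assms(3), of \<one>] assms(2) by (simp add: not_in_iff)
  moreover have "size S = size ?S' + count S \<one>"
    using arg_cong[OF multiset_partition[of S "\<lambda>s. s \<noteq> \<one>"], of size]
    by (simp add: filter_eq_replicate_mset)
  ultimately have "0 < size ?S'" using assms(5) by linarith
  then have "?S' \<noteq> {#}" by (metis less_irrefl size_empty)
  moreover have "set_mset S \<subseteq> carrier G"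
    using set_mset_mono[OF assms(3)] assms(1) unfolding seq_over_def by (auto split: if_splits)
  ultimately have "product_one G ?S'" using assms(4) by (intro product_one_filter_one)
  with sub show ?thesis unfolding product_one_free_def by blast
qed

end

lemma (in group) product_one_free_size_bound:
  assumes "finite (carrier G)" "gao_property G N" "seq_over G M" "product_one_free G M"
  shows "size M + order G \<le> N"
proof (rule ccontr)
  assume large: "\<not> size M + order G \<le> N"
  have "0 < order G" using assms(1) order_gt_0_iff_finite by blast
  let ?M = "M + replicate_mset (order G - 1) \<one>"
  have "seq_over G ?M" "N \<le> size ?M"
    using assms(3) large \<open>0 < order G\<close> by (auto simp: seq_over_def)
  then obtain S where "S \<subseteq># ?M" "size S = order G" "product_one G S"
    using assms(2) unfolding gao_property_def by blast
  moreover have "order G - 1 < order G" using \<open>0 < order G\<close> by simp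
  ultimately have "\<not> product_one_free G M"
    using not_product_one_free_padded[OF assms(3) one_not_in_product_one_free[OF assms(4)]] by simp
  with assms(4) show False by contradiction
qed

lemma (in group) not_gao_property_of_product_one_free:
  assumes "finite (carrier G)" "seq_over G M" "product_one_free G M"
  shows "\<not> gao_property G (size M + order G - 1)"
proof
  assume gao: "gao_property G (size M + order G - 1)"
  have "0 < order G" using assms(1) order_gt_0_iff_finite by blast
  let ?M = "M + replicate_mset (order G - 1) \<one>"
  have "seq_over G ?M" "size M + order G - 1 \<le> size ?M"
    using assms(2) by (auto simp: seq_over_def)
  then obtain S where "S \<subseteq># ?M" "size S = order G" "product_one G S"
    using gao unfolding gao_property_def by blast
  moreover have "order G - 1 < order G" using \<open>0 < order G\<close> by simp
  ultimately have "\<not> product_one_free G M"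
    using not_product_one_free_padded[OF assms(2) one_not_in_product_one_free[OF assms(3)]] by simp
  with assms(3) show False by contradiction
qed

lemma foldr_hom:
  assumes "h \<in> hom G H" "group G" "group H" "set xs \<subseteq> carrier G"
  shows "h (foldr (\<otimes>\<^bsub>G\<^esub>) xs \<one>\<^bsub>G\<^esub>) = foldr (\<otimes>\<^bsub>H\<^esub>) (map h xs) \<one>\<^bsub>H\<^esub>"
  using assms(4)
proof (induct xs)
  case Nil then show ?case using hom_one[OF assms(1-3)] by simp
next
  case (Cons a xs)
  then show ?case
    using hom_mult[OF assms(1)] monoid.foldr_mult_closed[OF group.is_monoid[OF assms(2)]] by simp
qed

lemma product_one_hom_image:
  assumes "h \<in> hom G H" "group G" "group H" "set_mset S \<subseteq> carrier G" "product_one G S"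
  shows "product_one H (image_mset h S)"
proof -
  obtain xs where xs: "mset xs = S" "foldr (\<otimes>\<^bsub>G\<^esub>) xs \<one>\<^bsub>G\<^esub> = \<one>\<^bsub>G\<^esub>" "S \<noteq> {#}"
    using assms(5) unfolding product_one_def by blast
  have "foldr (\<otimes>\<^bsub>H\<^esub>) (map h xs) \<one>\<^bsub>H\<^esub> = \<one>\<^bsub>H\<^esub>"
    using foldr_hom[OF assms(1-3), of xs] xs assms(4) hom_one[OF assms(1-3)] by auto
  with xs show ?thesis unfolding product_one_def by (intro conjI exI[of _ "map h xs"]) auto
qed

lemma image_mset_inv_into_image_mset:
  "inj_on h A \<Longrightarrow> set_mset M \<subseteq> A \<Longrightarrow> image_mset (inv_into A h) (image_mset h M) = M"
  by (induct M) auto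

lemma image_mset_image_mset_inv_into:
  "set_mset M \<subseteq> h ` A \<Longrightarrow> image_mset h (image_mset (inv_into A h) M) = M"
  by (induct M) (auto simp: f_inv_into_f)

lemma gao_property_iso:
  assumes "group G" "group H" "h \<in> iso G H" "gao_property G N"
  shows "gao_property H N"
  unfolding gao_property_def
proof (intro allI impI)
  fix M assume M: "seq_over H M \<and> N \<le> size M"
  let ?k = "inv_into (carrier G) h"
  have "?k \<in> hom H G" using group.iso_set_sym[OF assms(1,3)] by (rule iso_imp_homomorphism)
  then have "seq_over G (image_mset ?k M)"
    using M unfolding seq_over_def hom_def by auto
  then obtain S where S: "S \<subseteq># image_mset ?k M" "size S = order G" "product_one G S"
    using assms(4) M unfolding gao_property_def by auto
  have "image_mset h S \<subseteq># image_mset h (image_mset ?k M)" by (rule image_mset_subseteq_mono[OF S(1)])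
  also have "\<dots> = M"
    using M assms(3) by (intro image_mset_image_mset_inv_into) (auto simp: seq_over_def iso_iff)
  finally have "image_mset h S \<subseteq># M" .
  moreover have "G \<cong> H" using assms(3) unfolding is_iso_def by blast
  then have "order H = order G" unfolding order_def by (simp add: iso_same_card)
  moreover have "seq_over G S" using \<open>seq_over G (image_mset ?k M)\<close> S(1) by (rule seq_over_submset)
  then have "product_one H (image_mset h S)"
    using product_one_hom_image[OF iso_imp_homomorphism[OF assms(3)] assms(1,2)] S(3)
    unfolding seq_over_def by blast
  ultimately show "\<exists>S. S \<subseteq># M \<and> size S = order H \<and> product_one H S"
    using S(2) by (intro exI[of _ "image_mset h S"]) simp
qed

lemma product_one_free_iso:
  assumes "group G" "group H" "h \<in> iso G H" "seq_over G M" "product_one_free G M"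
  shows "product_one_free H (image_mset h M)"
  unfolding product_one_free_def
proof
  assume "\<exists>S. S \<subseteq># image_mset h M \<and> product_one H S"
  then obtain S where S: "S \<subseteq># image_mset h M" "product_one H S" by blast
  let ?k = "inv_into (carrier G) h"
  have k: "?k \<in> hom H G" using group.iso_set_sym[OF assms(1,3)] by (rule iso_imp_homomorphism)
  have h_inj: "inj_on h (carrier G)" and h_carrier: "h ` carrier G = carrier H"
    using assms(3) by (auto simp: iso_iff)
  have "set_mset S \<subseteq> carrier H"
    using set_mset_mono[OF S(1)] assms(4) h_carrier unfolding seq_over_def by auto
  then have "product_one G (image_mset ?k S)"
    using product_one_hom_image[OF k assms(2,1)] S(2) by blast
  moreover have "image_mset ?k S \<subseteq># image_mset ?k (image_mset h M)"
    by (rule image_mset_subseteq_mono[OF S(1)])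
  then have "image_mset ?k S \<subseteq># M"
    using image_mset_inv_into_image_mset[OF h_inj, of M] assms(4) unfolding seq_over_def by simp
  ultimately show False using assms(5) unfolding product_one_free_def by blast
qed

section \<open>Set functions of bounded degree\<close>

text \<open>A subset \<open>I\<close> of \<open>N\<close> is identified with its indicator vector; \<open>g\<close> is then a polynomial of
  degree at most \<open>m\<close> in the coordinates, \<open>c U\<close> being the coefficient of the monomial
  \<open>\<Prod>i\<in>U. x\<^sub>i\<close>.\<close>
definition multilinear_deg_le :: "'a set \<Rightarrow> nat \<Rightarrow> ('a set \<Rightarrow> 'r::comm_ring_1) \<Rightarrow> bool" where
  "multilinear_deg_le N m g \<longleftrightarrow>
     (\<exists>c. (\<forall>U. m < card U \<longrightarrow> c U = 0) \<and> (\<forall>I\<subseteq>N. g I = (\<Sum>U\<in>Pow I. c U)))"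

lemma multilinear_deg_le_const:
  assumes "finite N" shows "multilinear_deg_le N 0 (\<lambda>I. k)"
  unfolding multilinear_deg_le_def
proof (intro exI[of _ "\<lambda>U. if U = {} then k else 0"] conjI allI impI)
  fix I assume "I \<subseteq> N"
  then have "finite I" using assms finite_subset by blast
  then show "k = (\<Sum>U\<in>Pow I. if U = {} then k else 0)" by (simp add: sum.delta)
qed auto

lemma multilinear_deg_le_sum:
  assumes "finite N" shows "multilinear_deg_le N 1 (\<lambda>I. \<Sum>i\<in>I. w i)"
  unfolding multilinear_deg_le_def
proof (intro exI[of _ "\<lambda>U. if card U = 1 then w (the_elem U) else 0"] conjI allI impI)
  fix I assume "I \<subseteq> N"
  then have fI: "finite I" using assms finite_subset by blast
  have "(\<Sum>U\<in>Pow I. if card U = 1 then w (the_elem U) else 0)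
      = (\<Sum>U\<in>(\<lambda>i. {i}) ` I. if card U = 1 then w (the_elem U) else 0)"
    by (rule sum.mono_neutral_right) (use fI in \<open>auto simp: card_1_singleton_iff\<close>)
  also have "\<dots> = (\<Sum>i\<in>I. w i)"
    by (subst sum.reindex) (auto simp: inj_on_def)
  finally show "(\<Sum>i\<in>I. w i) = (\<Sum>U\<in>Pow I. if card U = 1 then w (the_elem U) else 0)" by simp
qed auto

lemma multilinear_deg_le_add:
  assumes "multilinear_deg_le N m g" "multilinear_deg_le N m h"
  shows "multilinear_deg_le N m (\<lambda>I. g I + h I)"
proof -
  obtain c d where "\<forall>U. m < card U \<longrightarrow> c U = 0" "\<forall>I\<subseteq>N. g I = (\<Sum>U\<in>Pow I. c U)"
    "\<forall>U. m < card U \<longrightarrow> d U = 0" "\<forall>I\<subseteq>N. h I = (\<Sum>U\<in>Pow I. d U)"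
    using assms unfolding multilinear_deg_le_def by blast
  then show ?thesis unfolding multilinear_deg_le_def
    by (intro exI[of _ "\<lambda>U. c U + d U"]) (simp add: sum.distrib)
qed

lemma multilinear_deg_le_mono:
  "multilinear_deg_le N m g \<Longrightarrow> m \<le> m' \<Longrightarrow> multilinear_deg_le N m' g"
  unfolding multilinear_deg_le_def by (meson le_less_trans)

lemma multilinear_deg_le_mult:
  assumes "finite N" "multilinear_deg_le N m g" "multilinear_deg_le N m' h"
  shows "multilinear_deg_le N (m + m') (\<lambda>I. g I * h I)"
proof -
  obtain c d where c: "\<forall>U. m < card U \<longrightarrow> c U = 0" "\<forall>I\<subseteq>N. g I = (\<Sum>U\<in>Pow I. c U)"
    and d: "\<forall>U. m' < card U \<longrightarrow> d U = 0" "\<forall>I\<subseteq>N. h I = (\<Sum>U\<in>Pow I. d U)"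
    using assms(2,3) unfolding multilinear_deg_le_def by blast
  define pairs where "pairs W = {p \<in> Pow W \<times> Pow W. fst p \<union> snd p = W}" for W :: "'a set"
  define e where "e W = (\<Sum>p\<in>pairs W. c (fst p) * d (snd p))" for W
  show ?thesis unfolding multilinear_deg_le_def
  proof (intro exI[of _ e] conjI allI impI)
    fix W :: "'a set" assume W: "m + m' < card W"
    have "c (fst p) * d (snd p) = 0" if "p \<in> pairs W" for p
    proof -
      have "card W \<le> card (fst p) + card (snd p)"
        using that card_Un_le unfolding pairs_def by (metis (mono_tags, lifting) mem_Collect_eq)
      with W have "m < card (fst p) \<or> m' < card (snd p)" by linarith
      with c(1) d(1) show ?thesis by auto
    qed
    then show "e W = 0" unfolding e_def by simp
  next
    fix I assume I: "I \<subseteq> N"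
    then have fI: "finite I" using assms(1) finite_subset by blast
    have "g I * h I = (\<Sum>p\<in>Pow I \<times> Pow I. c (fst p) * d (snd p))"
      using c d I by (simp add: sum_product sum.cartesian_product split_def)
    also have "\<dots> = (\<Sum>W\<in>Pow I. \<Sum>p\<in>{p \<in> Pow I \<times> Pow I. fst p \<union> snd p = W}. c (fst p) * d (snd p))"
      by (rule sum.group[symmetric]) (use fI in auto)
    also have "\<dots> = (\<Sum>W\<in>Pow I. e W)"
    proof (rule sum.cong[OF refl])
      fix W assume "W \<in> Pow I"
      then have "{p \<in> Pow I \<times> Pow I. fst p \<union> snd p = W} = pairs W" unfolding pairs_def by auto
      then show "(\<Sum>p\<in>{p \<in> Pow I \<times> Pow I. fst p \<union> snd p = W}. c (fst p) * d (snd p)) = e W"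
        unfolding e_def by simp
    qed
    finally show "g I * h I = (\<Sum>W\<in>Pow I. e W)" .
  qed
qed

text \<open>Each monomial of degree less than \<open>card N\<close> is annihilated by the alternating sum over the
  supersets of its support.\<close>
lemma multilinear_alternating_sum_eq_0:
  assumes "finite N" "multilinear_deg_le N m g" "m < card N"
  shows "(\<Sum>I\<in>Pow N. (-1) ^ card I * g I) = 0"
proof -
  obtain c where c: "\<forall>U. m < card U \<longrightarrow> c U = 0" "\<forall>I\<subseteq>N. g I = (\<Sum>U\<in>Pow I. c U)"
    using assms(2) unfolding multilinear_deg_le_def by blast
  have "(\<Sum>I\<in>Pow N. (-1) ^ card I * g I)
      = (\<Sum>I\<in>Pow N. \<Sum>U\<in>{U \<in> Pow N. U \<subseteq> I}. (-1) ^ card I * c U)"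
  proof (rule sum.cong[OF refl])
    fix I assume "I \<in> Pow N"
    then have "{U \<in> Pow N. U \<subseteq> I} = Pow I" by auto
    then show "(-1) ^ card I * g I = (\<Sum>U\<in>{U \<in> Pow N. U \<subseteq> I}. (-1) ^ card I * c U)"
      using c(2) \<open>I \<in> Pow N\<close> by (simp add: sum_distrib_left)
  qed
  also have "\<dots> = (\<Sum>U\<in>Pow N. \<Sum>I\<in>{I \<in> Pow N. U \<subseteq> I}. (-1) ^ card I * c U)"
    by (rule sum.swap_restrict) (use assms(1) in auto)
  also have "\<dots> = (\<Sum>U\<in>Pow N. (\<Sum>I | I \<subseteq> N \<and> U \<subseteq> I. (-1) ^ card I) * c U)"
    by (simp add: sum_distrib_right)
  also have "\<dots> = 0"
  proof (rule sum.neutral, rule ballI)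
    fix U assume U: "U \<in> Pow N"
    show "(\<Sum>I | I \<subseteq> N \<and> U \<subseteq> I. (-1) ^ card I) * c U = 0"
    proof (cases "m < card U")
      case False
      then have "U \<subset> N" using U assms(3) by auto
      then have "(\<Sum>I | I \<subseteq> N \<and> U \<subseteq> I. (-1) ^ card I) = (0::'b)"
        by (intro sum_alternating_cancels)
          (use assms(1) in \<open>auto simp: card_subsupersets_even_odd cong: conj_cong\<close>)
      then show ?thesis by simp
    qed (simp add: c(1))
  qed
  finally show ?thesis .
qed

lemma multilinear_deg_le_nonzero:
  assumes "finite N" "multilinear_deg_le N m g" "m < card N" "g {} \<noteq> 0"
  shows "\<exists>I\<subseteq>N. I \<noteq> {} \<and> g I \<noteq> 0"
proof (rule ccontr)
  assume "\<not> ?thesis"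
  then have "(\<Sum>I\<in>Pow N. (-1) ^ card I * g I) = (\<Sum>I\<in>{{}}. (-1) ^ card I * g I)"
    by (intro sum.mono_neutral_right) (use assms(1) in auto)
  with multilinear_alternating_sum_eq_0[OF assms(1-3)] assms(4) show False by simp
qed

lemma multilinear_deg_le_one_minus_square:
  assumes "finite N" shows "multilinear_deg_le N 2 (\<lambda>I. 1 - (\<Sum>i\<in>I. w i) ^ 2)"
proof -
  have "multilinear_deg_le N (1 + 1) (\<lambda>I. (\<Sum>i\<in>I. - w i) * (\<Sum>i\<in>I. w i))"
    by (intro multilinear_deg_le_mult multilinear_deg_le_sum assms)
  then have "multilinear_deg_le N 2 (\<lambda>I. (\<Sum>i\<in>I. - w i) * (\<Sum>i\<in>I. w i))"
    by (simp only: one_add_one)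
  moreover have "multilinear_deg_le N 2 (\<lambda>I. 1)"
    by (rule multilinear_deg_le_mono[OF multilinear_deg_le_const[OF assms]]) simp
  ultimately have "multilinear_deg_le N 2 (\<lambda>I. 1 + (\<Sum>i\<in>I. - w i) * (\<Sum>i\<in>I. w i))"
    by (intro multilinear_deg_le_add) simp_all
  then show ?thesis by (simp add: sum_negf power2_eq_square)
qed

lemma multilinear_deg_le_prod_one_minus_square:
  assumes "finite N"
  shows "multilinear_deg_le N (2 * length ws) (\<lambda>I. \<Prod>w\<leftarrow>ws. 1 - (\<Sum>i\<in>I. w i) ^ 2)"
proof (induct ws)
  case Nil then show ?case using multilinear_deg_le_const[OF assms] by simp
next
  case (Cons w ws)
  then show ?case
    using multilinear_deg_le_mult[OF assms multilinear_deg_le_one_minus_square[OF assms]] by simp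
qed

definition truncated_alternating :: "nat \<Rightarrow> 'a set \<Rightarrow> 'r::comm_ring_1" where
  "truncated_alternating m I = (\<Sum>U\<in>Pow I. if card U \<le> m then (-1) ^ card U else 0)"

lemma multilinear_deg_le_truncated_alternating:
  "multilinear_deg_le N m (truncated_alternating m)"
  unfolding multilinear_deg_le_def truncated_alternating_def
  by (intro exI[of _ "\<lambda>U. if card U \<le> m then (-1) ^ card U else 0"]) auto

lemma sum_Pow_by_card:
  assumes "finite I"
  shows "(\<Sum>U\<in>Pow I. f (card U)) = (\<Sum>k\<le>card I. of_nat (card I choose k) * (f k :: 'r::comm_ring_1))"
proof -
  have "(\<Sum>U\<in>Pow I. f (card U)) = (\<Sum>k\<le>card I. \<Sum>U\<in>{U \<in> Pow I. card U = k}. f (card U))"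
    by (rule sum.group[symmetric]) (use assms in \<open>auto intro: card_mono\<close>)
  also have "\<dots> = (\<Sum>k\<le>card I. of_nat (card I choose k) * f k)"
  proof (rule sum.cong[OF refl])
    fix k
    have "{U \<in> Pow I. card U = k} = {B. B \<subseteq> I \<and> card B = k}" by auto
    then show "(\<Sum>U\<in>{U \<in> Pow I. card U = k}. f (card U)) = of_nat (card I choose k) * f k"
      using n_subsets[OF assms] by simp
  qed
  finally show ?thesis .
qed

lemma sum_alternating_binomial_partial:
  "(\<Sum>k\<le>m. (-1) ^ k * of_nat (Suc n choose k)) = (-1) ^ m * (of_nat (n choose m) :: 'r::comm_ring_1)"
proof (induct m)
  case (Suc m)
  have "(\<Sum>k\<le>Suc m. (-1) ^ k * of_nat (Suc n choose k)) =
        (-1) ^ m * of_nat (n choose m) + (-1) ^ Suc m * (of_nat (n choose m) + of_nat (n choose Suc m) :: 'r)"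
    using Suc by simp
  then show ?case by (simp add: algebra_simps)
qed simp

lemma truncated_alternating_eq:
  assumes "finite I" "I \<noteq> {}"
  shows "truncated_alternating m I = (-1) ^ m * (of_nat (card I - 1 choose m) :: 'r::comm_ring_1)"
proof -
  have "card I \<noteq> 0" using assms by simp
  then obtain n where n: "card I = Suc n" using not0_implies_Suc by blast
  have "truncated_alternating m I
      = (\<Sum>k\<le>Suc n. of_nat (Suc n choose k) * (if k \<le> m then (-1) ^ k else 0) :: 'r)"
    unfolding truncated_alternating_def n[symmetric]
    using sum_Pow_by_card[OF assms(1), of "\<lambda>k. if k \<le> m then (-1) ^ k else 0"] by simp
  also have "\<dots> = (\<Sum>k\<le>max (Suc n) m. of_nat (Suc n choose k) * (if k \<le> m then (-1) ^ k else 0))"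
    by (rule sum.mono_neutral_left) (auto simp: binomial_eq_0)
  also have "\<dots> = (\<Sum>k\<le>m. (-1) ^ k * of_nat (Suc n choose k))"
    by (rule sum.mono_neutral_cong_right) auto
  also have "\<dots> = (-1) ^ m * of_nat (n choose m)" by (rule sum_alternating_binomial_partial)
  finally show ?thesis using n by simp
qed

section \<open>Zero-sum subsequences over \<open>\<int>/3\<close>\<close>

lemma F3_cases: "(x::3) = 0 \<or> x = 1 \<or> x = 2"
proof (induct x)
  case (of_int z)
  then have "z = 0 \<or> z = 1 \<or> z = 2" by auto
  then show ?case by auto
qed

lemma F3_one_minus_square: "1 - (x::3) ^ 2 = (if x = 0 then 1 else 0)"
  using F3_cases[of x] by (auto simp: power2_eq_square)

text \<open>\<open>binomial n 26\<close> is divisible by 3 for \<open>27 \<le> n \<le> 32\<close> (Lucas).\<close>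
lemma truncated_alternating_26:
  assumes "finite I" "card I \<le> 33"
  shows "(truncated_alternating 26 I :: 3) = (if card I = 0 \<or> card I = 27 then 1 else 0)"
proof (cases "I = {}")
  case False
  define n where "n = card I - 1"
  have "card I = Suc n" using False assms(1) unfolding n_def by (simp add: card_gt_0_iff)
  moreover have "n < 26 \<or> n = 26 \<or> n = 27 \<or> n = 28 \<or> n = 29 \<or> n = 30 \<or> n = 31 \<or> n = 32"
    using assms(2) n_def by linarith
  ultimately show ?thesis
    using truncated_alternating_eq[OF assms(1) False, of 26, where 'r = 3] unfolding n_def[symmetric]
    by (elim disjE) (simp_all add: binomial_eq_0 binomial_fact' fact_numeral)
qed (simp add: truncated_alternating_def)

text \<open>The Chevalley--Warning argument: \<open>f I \<cdot> \<Prod>w (1 - (\<Sum>i\<in>I. w i)\<^sup>2)\<close> has small degree, so it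
  cannot vanish on all nonempty \<open>I\<close>.\<close>
lemma F3_zero_sums_subset:
  fixes ws :: "('a \<Rightarrow> 3) list" and f :: "'a set \<Rightarrow> 3"
  assumes "finite N" "multilinear_deg_le N d f" "f {} \<noteq> 0" "2 * length ws + d < card N"
  shows "\<exists>I\<subseteq>N. I \<noteq> {} \<and> f I \<noteq> 0 \<and> (\<forall>w\<in>set ws. (\<Sum>i\<in>I. w i) = 0)"
proof -
  have ind: "(\<Prod>w\<leftarrow>ws. 1 - (\<Sum>i\<in>I. w i) ^ 2) = (if \<forall>w\<in>set ws. (\<Sum>i\<in>I. w i) = 0 then 1 else 0)"
    for I by (induct ws) (auto simp: F3_one_minus_square)
  define g where "g I = f I * (\<Prod>w\<leftarrow>ws. 1 - (\<Sum>i\<in>I. w i) ^ 2)" for I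
  have "multilinear_deg_le N (d + 2 * length ws) g"
    unfolding g_def by (intro multilinear_deg_le_mult assms multilinear_deg_le_prod_one_minus_square)
  moreover have "g {} \<noteq> 0" using assms(3) by (simp only: g_def ind) simp
  moreover have "d + 2 * length ws < card N" using assms(4) by simp
  ultimately obtain I where "I \<subseteq> N" "I \<noteq> {}" "g I \<noteq> 0"
    using multilinear_deg_le_nonzero[OF assms(1)] by blast
  then show ?thesis by (auto simp: g_def ind split: if_splits)
qed

lemma image_mset_nth_subseteq:
  assumes "I \<subseteq> {..<length xs}"
  shows "image_mset (nth xs) (mset_set I) \<subseteq># mset xs"
proof -
  have "mset xs = mset (map (nth xs) [0..<length xs])" by (simp add: map_nth)
  also have "\<dots> = image_mset (nth xs) (mset_set {..<length xs})" by (simp add: atLeast0LessThan)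
  finally have "mset xs = image_mset (nth xs) (mset_set {..<length xs})" .
  moreover have "mset_set I \<subseteq># mset_set {..<length xs}"
    using assms by (intro subset_imp_msubset_mset_set) auto
  ultimately show ?thesis by (simp add: image_mset_subseteq_mono)
qed

lemma sum_mset_image_nth: "(\<Sum>s\<in>#image_mset (nth xs) (mset_set I). f s) = (\<Sum>i\<in>I. f (xs ! i))"
  by (simp add: sum_unfold_sum_mset image_mset.compositionality comp_def)

lemma F3_zero_sums_submset:
  fixes u v :: "'a \<Rightarrow> 3"
  assumes "5 \<le> size M"
  shows "\<exists>S. S \<subseteq># M \<and> S \<noteq> {#} \<and> (\<Sum>s\<in>#S. u s) = 0 \<and> (\<Sum>s\<in>#S. v s) = 0"
proof -
  obtain xs where xs: "mset xs = M" using ex_mset by blast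
  have "\<exists>I\<subseteq>{..<length xs}. I \<noteq> {} \<and> (1::3) \<noteq> 0 \<and>
      (\<forall>w\<in>set [\<lambda>i. u (xs ! i), \<lambda>i. v (xs ! i)]. (\<Sum>i\<in>I. w i) = 0)"
    by (rule F3_zero_sums_subset[OF _ multilinear_deg_le_const]) (use assms xs in auto)
  then obtain I where I: "I \<subseteq> {..<length xs}" "I \<noteq> {}"
    "\<forall>w\<in>set [\<lambda>i. u (xs ! i), \<lambda>i. v (xs ! i)]. (\<Sum>i\<in>I. w i) = 0"
    by blast
  moreover have "finite I" using I(1) finite_subset by blast
  ultimately show ?thesis
    using image_mset_nth_subseteq[OF I(1)] xs
    by (intro exI[of _ "image_mset (nth xs) (mset_set I)"])
      (auto simp: sum_mset_image_nth mset_set_empty_iff)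
qed

lemma F3_zero_sums_submset_27:
  fixes u v z :: "'a \<Rightarrow> 3"
  assumes "size M = 33"
  shows "\<exists>S. S \<subseteq># M \<and> size S = 27 \<and>
    (\<Sum>s\<in>#S. u s) = 0 \<and> (\<Sum>s\<in>#S. v s) = 0 \<and> (\<Sum>s\<in>#S. z s) = 0"
proof -
  obtain xs where xs: "mset xs = M" using ex_mset by blast
  then have len: "length xs = 33" using assms by auto
  obtain I where I: "I \<subseteq> {..<length xs}" "I \<noteq> {}" "truncated_alternating 26 I \<noteq> (0::3)"
    "\<forall>w\<in>set [\<lambda>i. u (xs ! i), \<lambda>i. v (xs ! i), \<lambda>i. z (xs ! i)]. (\<Sum>i\<in>I. w i) = 0"
    using F3_zero_sums_subset[of "{..<length xs}" 26 "truncated_alternating 26"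
        "[\<lambda>i. u (xs ! i), \<lambda>i. v (xs ! i), \<lambda>i. z (xs ! i)]"]
      multilinear_deg_le_truncated_alternating len by (auto simp: truncated_alternating_def)
  moreover have "finite I" using I(1) finite_subset by blast
  moreover have "card I \<le> 33" using card_mono[OF _ I(1)] len by simp
  ultimately have "card I = 27" using truncated_alternating_26 by (metis card_0_eq)
  with I \<open>finite I\<close> show ?thesis
    using image_mset_nth_subseteq[OF I(1)] xs
    by (intro exI[of _ "image_mset (nth xs) (mset_set I)"]) (auto simp: sum_mset_image_nth)
qed

section \<open>The Heisenberg group over \<open>\<int>/3\<close>\<close>

type_synonym heis_elt = "3 \<times> 3 \<times> 3"

abbreviation ha :: "heis_elt \<Rightarrow> 3" where "ha x \<equiv> fst x"
abbreviation hb :: "heis_elt \<Rightarrow> 3" where "hb x \<equiv> fst (snd x)"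
abbreviation hc :: "heis_elt \<Rightarrow> 3" where "hc x \<equiv> snd (snd x)"

text \<open>\<open>(a, b, c)\<close> stands for the matrix \<open>[[1, b, c], [0, 1, a], [0, 0, 1]]\<close>.\<close>
definition heis_mult :: "heis_elt \<Rightarrow> heis_elt \<Rightarrow> heis_elt" where
  "heis_mult x y = (ha x + ha y, hb x + hb y, hc x + hc y + hb x * ha y)"

definition heis :: "heis_elt monoid" where
  "heis = \<lparr>carrier = UNIV, monoid.mult = heis_mult, one = (0, 0, 0)\<rparr>"

lemma heis_mult_assoc: "heis_mult (heis_mult x y) z = heis_mult x (heis_mult y z)"
  by (simp add: heis_mult_def algebra_simps)

lemma group_heis: "group heis"
proof (rule groupI)
  show "\<exists>y\<in>carrier heis. y \<otimes>\<^bsub>heis\<^esub> x = \<one>\<^bsub>heis\<^esub>" for x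
    by (intro bexI[of _ "(- ha x, - hb x, - hc x + hb x * ha x)"]) (auto simp: heis_def heis_mult_def)
qed (auto simp: heis_def heis_mult_def algebra_simps)

definition heis_prod :: "heis_elt list \<Rightarrow> heis_elt" where
  "heis_prod xs = foldr heis_mult xs (0, 0, 0)"

lemma product_one_heis_iff:
  "product_one heis S \<longleftrightarrow> S \<noteq> {#} \<and> (\<exists>xs. mset xs = S \<and> heis_prod xs = (0, 0, 0))"
  by (simp add: product_one_def heis_def heis_prod_def)

lemma heis_mult_zero_left [simp]: "heis_mult (0, 0, 0) x = x"
  by (simp add: heis_mult_def)

lemma heis_prod_Nil [simp]: "heis_prod [] = (0, 0, 0)"
  and heis_prod_Cons [simp]: "heis_prod (x # xs) = heis_mult x (heis_prod xs)"
  by (simp_all add: heis_prod_def)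

lemma heis_prod_append: "heis_prod (xs @ ys) = heis_mult (heis_prod xs) (heis_prod ys)"
  by (induct xs) (simp_all add: heis_mult_assoc)

lemma ha_heis_prod: "ha (heis_prod xs) = (\<Sum>x\<leftarrow>xs. ha x)"
  and hb_heis_prod: "hb (heis_prod xs) = (\<Sum>x\<leftarrow>xs. hb x)"
  by (induct xs) (simp_all add: heis_mult_def)

abbreviation sum_a :: "heis_elt multiset \<Rightarrow> 3" where "sum_a S \<equiv> \<Sum>s\<in>#S. ha s"
abbreviation sum_b :: "heis_elt multiset \<Rightarrow> 3" where "sum_b S \<equiv> \<Sum>s\<in>#S. hb s"

lemma sum_mset_mset: "(\<Sum>s\<in>#mset xs. f s) = (\<Sum>s\<leftarrow>xs. f s)"
  by (simp flip: mset_map add: sum_mset_sum_list)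

lemma heis_prod_eq_one_iff:
  "heis_prod xs = (0, 0, 0) \<longleftrightarrow> sum_a (mset xs) = 0 \<and> sum_b (mset xs) = 0 \<and> hc (heis_prod xs) = 0"
  by (cases "heis_prod xs") (auto simp: sum_mset_mset simp flip: ha_heis_prod hb_heis_prod)

text \<open>\<open>x y = y x (0, 0, heis_form x y)\<close>.\<close>
definition heis_form :: "heis_elt \<Rightarrow> heis_elt \<Rightarrow> 3" where
  "heis_form x y = hb x * ha y - hb y * ha x"

definition heis_central :: "heis_elt \<Rightarrow> bool" where
  "heis_central x \<longleftrightarrow> ha x = 0 \<and> hb x = 0"

lemma hc_heis_prod_swap:
  "hc (heis_prod (xs @ p # q # ys)) = hc (heis_prod (xs @ q # p # ys)) + heis_form p q"
  by (simp add: heis_prod_append heis_mult_def heis_form_def ha_heis_prod hb_heis_prod algebra_simps)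

lemma heis_form_self [simp]: "heis_form x x = 0"
  by (simp add: heis_form_def algebra_simps)

lemma heis_form_antisym: "heis_form x y = - heis_form y x"
  by (simp add: heis_form_def)

lemma noncentral_if_heis_form_ne_0: "heis_form x y \<noteq> 0 \<Longrightarrow> \<not> heis_central x \<and> \<not> heis_central y"
  by (auto simp: heis_central_def heis_form_def)

lemma F3_three_eq_0 [simp]: "(3::3) = 0"
  by simp

lemma F3_mult_eq_0: "(a::3) * b = 0 \<Longrightarrow> a = 0 \<or> b = 0"
  using F3_cases[of a] F3_cases[of b] by auto

lemma heis_form_eq_0_trans:
  assumes "\<not> heis_central r" "heis_form x r = 0" "heis_form y r = 0"
  shows "heis_form x y = 0"
proof -
  have hx: "hb x * ha r = hb r * ha x" and hy: "hb y * ha r = hb r * ha y"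
    using assms(2,3) by (simp_all add: heis_form_def)
  have "ha r * heis_form x y = ha y * (hb x * ha r) - ha x * (hb y * ha r)"
    by (simp add: heis_form_def algebra_simps)
  then have "ha r * heis_form x y = 0" unfolding hx hy by (simp add: algebra_simps)
  moreover have "hb r * heis_form x y = hb x * (hb r * ha y) - hb y * (hb r * ha x)"
    by (simp add: heis_form_def algebra_simps)
  then have "hb r * heis_form x y = 0" unfolding hx[symmetric] hy[symmetric] by (simp add: algebra_simps)
  ultimately show ?thesis using assms(1) F3_mult_eq_0 unfolding heis_central_def by blast
qed

lemma sum_heis_form: "(\<Sum>s\<in>#S. heis_form s y) = sum_b S * ha y - hb y * sum_a S"
  by (induct S) (simp_all add: heis_form_def algebra_simps)

lemma sum_a_central: "\<forall>c\<in>#C. heis_central c \<Longrightarrow> sum_a C = 0"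
  by (induct C) (auto simp: heis_central_def)

lemma sum_b_central: "\<forall>c\<in>#C. heis_central c \<Longrightarrow> sum_b C = 0"
  by (induct C) (auto simp: heis_central_def)

definition two_noncommuting_pairs :: "heis_elt multiset \<Rightarrow> bool" where
  "two_noncommuting_pairs S \<longleftrightarrow>
     (\<exists>p1 q1 p2 q2. {#p1, q1, p2, q2#} \<subseteq># S \<and> heis_form p1 q1 \<noteq> 0 \<and> heis_form p2 q2 \<noteq> 0)"

definition pairwise_commuting :: "heis_elt multiset \<Rightarrow> bool" where
  "pairwise_commuting S \<longleftrightarrow> (\<forall>x\<in>#S. \<forall>y\<in>#S. heis_form x y = 0)"

text \<open>Swapping a non-commuting pair shifts the \<open>c\<close>-coordinate of the product by a nonzero amount;
  with two disjoint pairs the four resulting values \<open>t, t + e\<^sub>1, t + e\<^sub>2, t + e\<^sub>1 + e\<^sub>2\<close> cover \<open>0\<close>.\<close>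
lemma product_one_heis_two_pairs:
  assumes "two_noncommuting_pairs S" "sum_a S = 0" "sum_b S = 0"
  shows "product_one heis S"
proof -
  obtain p1 q1 p2 q2 where P: "{#p1, q1, p2, q2#} \<subseteq># S" "heis_form p1 q1 \<noteq> 0" "heis_form p2 q2 \<noteq> 0"
    using assms(1) unfolding two_noncommuting_pairs_def by blast
  obtain rs where "mset rs = S - {#p1, q1, p2, q2#}" using ex_mset by blast
  then have S: "S = mset (p1 # q1 # p2 # q2 # rs)"
    using subset_mset.add_diff_inverse[OF P(1)] by simp
  define xs1 where "xs1 = q1 # p1 # q2 # p2 # rs"
  define xs2 where "xs2 = p1 # q1 # q2 # p2 # rs"
  define xs3 where "xs3 = q1 # p1 # p2 # q2 # rs"
  define xs4 where "xs4 = p1 # q1 # p2 # q2 # rs"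
  define t where "t = hc (heis_prod xs1)"
  have "hc (heis_prod xs2) = t + heis_form p1 q1"
    using hc_heis_prod_swap[of "[]" p1 q1 "q2 # p2 # rs"] by (simp add: t_def xs1_def xs2_def)
  moreover have "hc (heis_prod xs3) = t + heis_form p2 q2"
    using hc_heis_prod_swap[of "[q1, p1]" p2 q2 rs] by (simp add: t_def xs1_def xs3_def)
  moreover have "hc (heis_prod xs4) = t + heis_form p1 q1 + heis_form p2 q2"
    using hc_heis_prod_swap[of "[]" p1 q1 "p2 # q2 # rs"] hc_heis_prod_swap[of "[q1, p1]" p2 q2 rs]
    by (simp add: t_def xs1_def xs4_def)
  moreover have "t = 0 \<or> t + heis_form p1 q1 = 0 \<or> t + heis_form p2 q2 = 0 \<or>
      t + heis_form p1 q1 + heis_form p2 q2 = 0"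
    using P(2,3) F3_cases[of t] F3_cases[of "heis_form p1 q1"] F3_cases[of "heis_form p2 q2"]
    by (elim disjE) simp_all
  ultimately have "\<exists>xs\<in>{xs1, xs2, xs3, xs4}. hc (heis_prod xs) = 0"
    unfolding t_def by (elim disjE) auto
  then obtain xs where xs: "xs \<in> {xs1, xs2, xs3, xs4}" "hc (heis_prod xs) = 0" by blast
  then have "mset xs = S"
    unfolding S xs1_def xs2_def xs3_def xs4_def by (auto simp: add_mset_commute)
  with xs(2) assms(2,3) have "heis_prod xs = (0, 0, 0)" by (simp add: heis_prod_eq_one_iff)
  with \<open>mset xs = S\<close> S show ?thesis unfolding product_one_heis_iff by auto
qed

definition heis_psi :: "heis_elt \<Rightarrow> 3" where
  "heis_psi x = hc x + ha x * hb x"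

abbreviation sum_psi :: "heis_elt multiset \<Rightarrow> 3" where "sum_psi S \<equiv> \<Sum>s\<in>#S. heis_psi s"

text \<open>The cross terms \<open>hb x * ha y\<close> of a commuting family occur three times over, so they
  vanish in characteristic 3.\<close>
lemma hc_heis_prod_commuting:
  assumes "\<forall>x\<in>set xs. \<forall>y\<in>set xs. heis_form x y = 0"
  shows "hc (heis_prod xs) = (\<Sum>x\<leftarrow>xs. heis_psi x) - (\<Sum>x\<leftarrow>xs. ha x) * (\<Sum>x\<leftarrow>xs. hb x)"
  using assms
proof (induct xs)
  case (Cons x xs)
  define A where "A = (\<Sum>x\<leftarrow>xs. ha x)"
  define B where "B = (\<Sum>x\<leftarrow>xs. hb x)"
  have IH: "hc (heis_prod xs) = (\<Sum>x\<leftarrow>xs. heis_psi x) - A * B"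
    using Cons by (simp add: A_def B_def)
  have commute: "hb x * ha y = ha x * hb y" if "y \<in> set xs" for y
  proof -
    have "heis_form x y = 0" using Cons.prems that by simp
    then show ?thesis by (simp add: heis_form_def mult.commute)
  qed
  have "(\<Sum>y\<leftarrow>xs. hb x * ha y) = (\<Sum>y\<leftarrow>xs. ha x * hb y)"
    by (rule arg_cong[where f = sum_list], rule map_cong[OF refl commute])
  then have cross: "hb x * A = ha x * B" unfolding A_def B_def by (simp only: sum_list_const_mult)
  have three: "(z::3) + z + z = 0" for z using F3_cases[of z] by auto
  have "hc (heis_prod (x # xs)) = hc x + ((\<Sum>x\<leftarrow>xs. heis_psi x) - A * B) + hb x * A"
    using IH by (simp add: heis_mult_def ha_heis_prod A_def)
  also have "\<dots> = heis_psi x + (\<Sum>x\<leftarrow>xs. heis_psi x) - (ha x + A) * (hb x + B) +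
      (hb x * A + hb x * A + hb x * A)"
    using cross by (simp add: heis_psi_def algebra_simps)
  also have "\<dots> = heis_psi x + (\<Sum>x\<leftarrow>xs. heis_psi x) - (ha x + A) * (hb x + B)"
    by (simp only: three add_0_right)
  finally show ?case by (simp add: A_def B_def)
qed simp

lemma product_one_heis_commuting:
  assumes "S \<noteq> {#}" "pairwise_commuting S" "sum_a S = 0" "sum_b S = 0" "sum_psi S = 0"
  shows "product_one heis S"
proof -
  obtain xs where xs: "mset xs = S" using ex_mset by blast
  have "hc (heis_prod xs) = sum_psi S - sum_a S * sum_b S"
    using hc_heis_prod_commuting[of xs] assms(2) xs
    by (auto simp: pairwise_commuting_def sum_mset_mset)
  then show ?thesis
    using assms xs by (auto simp: product_one_heis_iff heis_prod_eq_one_iff)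
qed

lemma heis_prod_central:
  "\<forall>c\<in>set cs. heis_central c \<Longrightarrow> heis_prod cs = (0, 0, \<Sum>c\<leftarrow>cs. hc c)"
  by (induct cs) (auto simp: heis_mult_def heis_central_def)

lemma hc_heis_prod_three_central:
  assumes "\<forall>c\<in>set cs. heis_central c"
  shows "hc (heis_prod (p # q # r # cs)) =
    hc p + hc q + hc r + (\<Sum>c\<leftarrow>cs. hc c) + hb p * ha q + hb p * ha r + hb q * ha r"
  by (simp add: heis_mult_def heis_prod_central[OF assms] algebra_simps)

lemma sum_psi_three_central:
  assumes "\<forall>c\<in>set cs. heis_central c"
  shows "sum_psi (mset (p # q # r # cs)) = heis_psi p + heis_psi q + heis_psi r + (\<Sum>c\<leftarrow>cs. hc c)"
proof -
  have "(\<Sum>c\<leftarrow>cs. heis_psi c) = (\<Sum>c\<leftarrow>cs. hc c)"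
    using assms by (induct cs) (auto simp: heis_psi_def heis_central_def)
  then show ?thesis by (simp add: sum_mset_mset add.assoc)
qed

text \<open>The left-hand side plus the \<open>\<psi>\<close>-sum is three times a polynomial in the coordinates.\<close>
lemma hc_heis_prod_two_orders:
  assumes "ha p + ha q + ha r = 0" "hb p + hb q + hb r = 0" "\<forall>c\<in>set cs. heis_central c"
  shows "hc (heis_prod (p # q # r # cs)) + hc (heis_prod (q # p # r # cs)) =
    - sum_psi (mset (p # q # r # cs))"
proof -
  have ar: "ha r = - ha p - ha q" and br: "hb r = - hb p - hb q"
    using assms(1,2) by (simp_all add: algebra_simps eq_neg_iff_add_eq_0)
  have "hc (heis_prod (p # q # r # cs)) + hc (heis_prod (q # p # r # cs)) +
      sum_psi (mset (p # q # r # cs)) =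
      3 * (hc p + hc q + hc r + (\<Sum>c\<leftarrow>cs. hc c) + ha p * hb p + ha q * hb q + ha p * hb q + ha q * hb p)"
    unfolding hc_heis_prod_three_central[OF assms(3)] sum_psi_three_central[OF assms(3)]
    unfolding heis_psi_def ar br by (simp add: algebra_simps)
  then have "hc (heis_prod (p # q # r # cs)) + hc (heis_prod (q # p # r # cs)) +
      sum_psi (mset (p # q # r # cs)) = 0" by (simp only: F3_three_eq_0 mult_zero_left)
  then show ?thesis by (rule eq_neg_iff_add_eq_0[THEN iffD2])
qed

lemma F3_zero_of_diff_sum:
  fixes t1 t2 e s :: 3
  assumes "t1 = t2 + e" "e \<noteq> 0" "t1 + t2 = - s" "s \<noteq> 0"
  shows "t1 = 0 \<or> t2 = 0"
  using assms F3_cases[of t2] F3_cases[of e] F3_cases[of s] by (elim disjE) simp_all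

lemma product_one_heis_triangle:
  assumes "ha p + ha q + ha r = 0" "hb p + hb q + hb r = 0" "heis_form p q \<noteq> 0"
    and "\<forall>c\<in>#C. heis_central c" and "sum_psi ({#p, q, r#} + C) \<noteq> 0"
  shows "product_one heis ({#p, q, r#} + C)"
proof -
  obtain cs where cs: "mset cs = C" using ex_mset by blast
  have cen: "\<forall>c\<in>set cs. heis_central c" using assms(4) cs by auto
  define xs1 where "xs1 = p # q # r # cs"
  define xs2 where "xs2 = q # p # r # cs"
  have S: "mset xs1 = {#p, q, r#} + C" "mset xs2 = {#p, q, r#} + C"
    using cs unfolding xs1_def xs2_def by (simp_all add: add_mset_commute)
  have "hc (heis_prod xs1) = hc (heis_prod xs2) + heis_form p q"
    unfolding xs1_def xs2_def using hc_heis_prod_swap[of "[]" p q "r # cs"] by simp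
  moreover have "hc (heis_prod xs1) + hc (heis_prod xs2) = - sum_psi ({#p, q, r#} + C)"
    unfolding S(1)[symmetric] unfolding xs1_def xs2_def
    by (rule hc_heis_prod_two_orders[OF assms(1,2) cen])
  ultimately have "hc (heis_prod xs1) = 0 \<or> hc (heis_prod xs2) = 0"
    using F3_zero_of_diff_sum assms(3,5) by blast
  then obtain xs where xs: "xs \<in> {xs1, xs2}" "hc (heis_prod xs) = 0" by blast
  have "sum_a ({#p, q, r#} + C) = 0" "sum_b ({#p, q, r#} + C) = 0"
    using assms(1,2) sum_a_central[OF assms(4)] sum_b_central[OF assms(4)] by (simp_all add: add.assoc)
  with xs S have "mset xs = {#p, q, r#} + C" "heis_prod xs = (0, 0, 0)"
    by (auto simp only: heis_prod_eq_one_iff insert_iff empty_iff)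
  then show ?thesis unfolding product_one_heis_iff by auto
qed

lemma doubleton_subseteq: "s \<in># R \<Longrightarrow> t \<in># R \<Longrightarrow> s \<noteq> t \<Longrightarrow> {#s, t#} \<subseteq># R"
  by (simp add: insert_subset_eq_iff in_diff_count)

lemma doubleton_subseteq_of_size:
  assumes "2 \<le> size M" shows "\<exists>s t. {#s, t#} \<subseteq># M"
proof -
  obtain s where s: "s \<in># M" using assms by (metis multiset_nonemptyE not_numeral_le_zero size_empty)
  then have "1 \<le> size (M - {#s#})" using assms by (simp add: size_Diff_submset)
  then obtain t where "t \<in># M - {#s#}" by (metis multiset_nonemptyE not_one_le_zero size_empty)
  with s show ?thesis by (auto simp: insert_subset_eq_iff)
qed

lemma pairwise_commuting_rest:
  assumes "\<not> two_noncommuting_pairs ({#x, y#} + R)" "heis_form x y \<noteq> 0"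
  shows "pairwise_commuting R"
  unfolding pairwise_commuting_def
proof (intro ballI)
  fix s t assume st: "s \<in># R" "t \<in># R"
  show "heis_form s t = 0"
  proof (rule ccontr)
    assume st_form: "heis_form s t \<noteq> 0"
    then have "s \<noteq> t" by auto
    with st have "{#x, y#} + {#s, t#} \<subseteq># {#x, y#} + R"
      by (intro subset_mset.add_left_mono doubleton_subseteq)
    then have "{#x, y, s, t#} \<subseteq># {#x, y#} + R" by simp
    with assms st_form show False unfolding two_noncommuting_pairs_def by blast
  qed
qed

text \<open>If \<open>x\<close> commuted with a noncentral \<open>r\<close>, it would commute with all of \<open>R\<close>; as the sums
  vanish, bilinearity would then force \<open>heis_form y x = 0\<close>.\<close>
lemma heis_form_ne_0_rest:
  assumes "sum_a ({#x, y#} + R) = 0" "sum_b ({#x, y#} + R) = 0" "pairwise_commuting R"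
    and "heis_form x y \<noteq> 0" "r \<in># R" "\<not> heis_central r"
  shows "heis_form x r \<noteq> 0"
proof
  assume xr: "heis_form x r = 0"
  have "heis_form s x = 0" if "s \<in># R" for s
  proof -
    have "heis_form s r = 0" using assms(3,5) that unfolding pairwise_commuting_def by blast
    then have "heis_form x s = 0" using heis_form_eq_0_trans[OF assms(6) xr] by blast
    then show ?thesis using heis_form_antisym[of s x] by simp
  qed
  then have "(\<Sum>s\<in>#R. heis_form s x) = 0" by (simp add: sum_mset.neutral)
  moreover have "(\<Sum>s\<in>#{#x, y#} + R. heis_form s x) = 0"
    using assms(1,2) by (simp only: sum_heis_form) simp
  ultimately have "heis_form y x = 0" by simp
  with assms(4) heis_form_antisym[of x y] show False by simp
qed

lemma heis_form_ne_0_rest_both: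
  assumes "sum_a ({#x, y#} + R) = 0" "sum_b ({#x, y#} + R) = 0"
    and "\<not> two_noncommuting_pairs ({#x, y#} + R)" "heis_form x y \<noteq> 0"
    and "r \<in># R" "\<not> heis_central r"
  shows "heis_form x r \<noteq> 0 \<and> heis_form y r \<noteq> 0"
proof -
  have comm: "pairwise_commuting R" using pairwise_commuting_rest assms(3,4) by simp
  have "heis_form y x \<noteq> 0" using assms(4) heis_form_antisym[of y x] by simp
  moreover have "sum_a ({#y, x#} + R) = 0" "sum_b ({#y, x#} + R) = 0"
    using assms(1,2) by (simp_all add: add_mset_commute)
  ultimately show ?thesis
    using heis_form_ne_0_rest[OF assms(1,2) comm assms(4-6)] heis_form_ne_0_rest[OF _ _ comm _ assms(5,6)]
    by blast
qed

lemma noncommuting_pair_decomp: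
  assumes "sum_a S = 0" "sum_b S = 0" "\<not> two_noncommuting_pairs S"
    and "{#x, y#} \<subseteq># S" "heis_form x y \<noteq> 0"
  shows "\<exists>r C. S = {#x, y, r#} + C \<and> (\<forall>c\<in>#C. heis_central c) \<and>
    heis_form x r \<noteq> 0 \<and> heis_form y r \<noteq> 0"
proof -
  define R where "R = S - {#x, y#}"
  have S: "S = {#x, y#} + R" unfolding R_def using subset_mset.add_diff_inverse[OF assms(4)] by simp
  have xyr: "heis_form x r \<noteq> 0 \<and> heis_form y r \<noteq> 0" if "r \<in># R" "\<not> heis_central r" for r
    using heis_form_ne_0_rest_both[OF _ _ _ assms(5) that] assms(1-3) S by simp
  define Rn where "Rn = filter_mset (\<lambda>s. \<not> heis_central s) R"
  define C where "C = filter_mset heis_central R"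
  have R: "R = Rn + C"
    unfolding Rn_def C_def using multiset_partition[of R heis_central] by (simp add: add.commute)
  have C: "\<forall>c\<in>#C. heis_central c" unfolding C_def by simp
  have "size Rn = 1"
  proof (rule ccontr)
    assume "size Rn \<noteq> 1"
    then consider "Rn = {#}" | r1 r2 where "{#r1, r2#} \<subseteq># Rn"
      using doubleton_subseteq_of_size[of Rn] by (cases "size Rn") auto
    then show False
    proof cases
      case 1
      then have "ha y = - ha x" "hb y = - hb x"
        using assms(1,2) sum_a_central[OF C] sum_b_central[OF C] S R
        by (simp_all add: eq_neg_iff_add_eq_0 add.commute)
      then show False using assms(5) by (simp add: heis_form_def algebra_simps)
    next
      case 2
      then have r: "r1 \<in># R" "\<not> heis_central r1" "r2 \<in># R" "\<not> heis_central r2"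
        unfolding Rn_def by (auto dest: mset_subset_eqD)
      have "Rn \<subseteq># R" unfolding R by simp
      with 2 have "{#r1, r2#} \<subseteq># R" by (rule subset_mset.order_trans)
      then have "{#x, y#} + {#r1, r2#} \<subseteq># {#x, y#} + R" by (rule subset_mset.add_left_mono)
      then have "{#x, r1, y, r2#} \<subseteq># S" using S by (simp add: add_mset_commute)
      with xyr[OF r(1,2)] xyr[OF r(3,4)] assms(3) show False
        unfolding two_noncommuting_pairs_def by blast
    qed
  qed
  then obtain r where r: "Rn = {#r#}" using size_1_singleton_mset by blast
  then have "r \<in># Rn" by simp
  then have "r \<in># R" "\<not> heis_central r" unfolding Rn_def by simp_all
  moreover have "S = {#x, y, r#} + C" using S R r by simp
  ultimately show ?thesis using C xyr by blast
qed

lemma two_noncommuting_pairs_if_noncentral: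
  assumes "\<forall>s\<in>#B. \<not> heis_central s" "sum_a B = 0" "sum_b B = 0"
    and "{#u, v#} \<subseteq># B" "heis_form u v \<noteq> 0" "size B \<noteq> 3"
  shows "two_noncommuting_pairs B"
proof (rule ccontr)
  assume "\<not> two_noncommuting_pairs B"
  from noncommuting_pair_decomp[OF assms(2,3) this assms(4,5)] obtain r C
    where "B = {#u, v, r#} + C" "\<forall>c\<in>#C. heis_central c" by blast
  with assms(1,6) show False by (cases "C = {#}") auto
qed

text \<open>The case of a zero-sum-free \<open>Y\<close> of Davenport's bound \<open>D(C\<^sub>3\<^sup>2) = 5\<close>, applied to \<open>Y\<close> and
  \<open>-f\<close>: the abelian image of \<open>f\<close> is a subsum of \<open>Y\<close>.\<close>
lemma sums_of_zero_sum_free_submset: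
  assumes "size Y = 4"
    and free: "\<nexists>B. B \<subseteq># Y \<and> B \<noteq> {#} \<and> sum_a B = 0 \<and> sum_b B = 0"
  shows "\<exists>B. B \<subseteq># Y \<and> sum_a B = ha f \<and> sum_b B = hb f"
proof -
  define g :: heis_elt where "g = (- ha f, - hb f, 0)"
  obtain B where B: "B \<subseteq># add_mset g Y" "B \<noteq> {#}" "sum_a B = 0" "sum_b B = 0"
    using F3_zero_sums_submset[of "add_mset g Y" "\<lambda>s. ha s" "\<lambda>s. hb s"] assms(1) by auto
  have "B - {#g#} \<subseteq># Y" using B(1) by (simp add: subset_eq_diff_conv)
  have g: "g \<in># B"
  proof (rule ccontr)
    assume "g \<notin># B"
    with \<open>B - {#g#} \<subseteq># Y\<close> have "B \<subseteq># Y" by (simp add: diff_single_trivial)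
    with free B show False by blast
  qed
  from multi_member_split[OF g] obtain B' where B': "B = add_mset g B'" ..
  then have "- ha f + sum_a B' = 0" "- hb f + sum_b B' = 0" using B(3,4) by (simp_all add: g_def)
  then have "sum_a B' = ha f" "sum_b B' = hb f" by (simp_all add: add_eq_0_iff)
  moreover have "B' \<subseteq># Y" using \<open>B - {#g#} \<subseteq># Y\<close> B' by simp
  ultimately show ?thesis by blast
qed

lemma heis_form_eq_0_if_same_ab:
  "ha x = ha y \<Longrightarrow> hb x = hb y \<Longrightarrow> heis_form x y = 0"
  by (simp add: heis_form_def mult.commute)

lemma tripleton_subseteq:
  "a \<in># Y \<Longrightarrow> b \<in># Y \<Longrightarrow> c \<in># Y \<Longrightarrow> a \<noteq> b \<Longrightarrow> a \<noteq> c \<Longrightarrow> b \<noteq> c \<Longrightarrow> {#a, b, c#} \<subseteq># Y"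
  by (simp add: insert_subset_eq_iff in_diff_count)

lemma singleton_of_sums_noncentral:
  assumes "size Z \<le> 1" "sum_a Z = ha f" "sum_b Z = hb f" "\<not> heis_central f"
  obtains z where "Z = {#z#}" "ha z = ha f" "hb z = hb f"
proof -
  have "Z \<noteq> {#}" using assms(2-4) unfolding heis_central_def by auto
  with assms(1) have "size Z = 1" by (simp add: Suc_le_eq nonempty_has_size)
  then obtain z where "Z = {#z#}" using size_1_singleton_mset by blast
  with assms(2,3) that show ?thesis by simp
qed

lemma exists_two_noncommuting_pairs_submset:
  assumes "\<forall>s\<in>#A. \<not> heis_central s" "B \<subseteq># A" "{#u, v#} \<subseteq># B" "heis_form u v \<noteq> 0"
    and "size B \<noteq> 3" "sum_a B = 0" "sum_b B = 0"
  shows "\<exists>B. B \<subseteq># A \<and> sum_a B = 0 \<and> sum_b B = 0 \<and> two_noncommuting_pairs B"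
proof (intro exI conjI)
  show "B \<subseteq># A" "sum_a B = 0" "sum_b B = 0" by fact+
  have "\<forall>s\<in>#B. \<not> heis_central s" using assms(1,2) by (auto dest: mset_subset_eqD)
  then show "two_noncommuting_pairs B"
    using assms(3-7) by (intro two_noncommuting_pairs_if_noncentral)
qed

text \<open>Each of \<open>p, q, r\<close> has the abelian image of a part of \<open>Y\<close>, which can replace it unless all
  three parts are single terms; those would form a zero-sum triple.\<close>
lemma two_noncommuting_pairs_of_zero_sum_free:
  assumes pq: "heis_form p q \<noteq> 0" and pr: "heis_form p r \<noteq> 0" and qr: "heis_form q r \<noteq> 0"
    and sums: "ha p + ha q + ha r = 0" "hb p + hb q + hb r = 0"
    and Y: "size Y = 4" "\<forall>y\<in>#Y. \<not> heis_central y"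
    and free: "\<nexists>B. B \<subseteq># Y \<and> B \<noteq> {#} \<and> sum_a B = 0 \<and> sum_b B = 0"
  shows "\<exists>B. B \<subseteq># {#p, q, r#} + Y \<and> sum_a B = 0 \<and> sum_b B = 0 \<and> two_noncommuting_pairs B"
proof -
  have nc: "\<not> heis_central p" "\<not> heis_central q" "\<not> heis_central r"
    using noncentral_if_heis_form_ne_0 pq qr by blast+
  then have ncY: "\<forall>s\<in>#{#p, q, r#} + Y. \<not> heis_central s" using Y(2) by auto
  obtain Yp Yq Yr where Yp: "Yp \<subseteq># Y" "sum_a Yp = ha p" "sum_b Yp = hb p"
    and Yq: "Yq \<subseteq># Y" "sum_a Yq = ha q" "sum_b Yq = hb q"
    and Yr: "Yr \<subseteq># Y" "sum_a Yr = ha r" "sum_b Yr = hb r"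
    using sums_of_zero_sum_free_submset[OF Y(1) free] by meson
  consider "2 \<le> size Yp" | "2 \<le> size Yq" | "2 \<le> size Yr"
    | "size Yp \<le> 1" "size Yq \<le> 1" "size Yr \<le> 1" by linarith
  then show ?thesis
  proof cases
    case 1
    have "{#q, r#} + Yp \<subseteq># {#p, q, r#} + Y"
      by (rule mset_subset_eq_mono_add[OF _ Yp(1)]) (simp add: insert_subset_eq_iff)
    then show ?thesis
    proof (rule exists_two_noncommuting_pairs_submset[OF ncY _ _ qr])
    qed (use Yp sums 1 in \<open>simp_all add: algebra_simps insert_subset_eq_iff\<close>)
  next
    case 2
    have "{#p, r#} + Yq \<subseteq># {#p, q, r#} + Y"
      by (rule mset_subset_eq_mono_add[OF _ Yq(1)]) (simp add: insert_subset_eq_iff)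
    then show ?thesis
    proof (rule exists_two_noncommuting_pairs_submset[OF ncY _ _ pr])
    qed (use Yq sums 2 in \<open>simp_all add: algebra_simps insert_subset_eq_iff\<close>)
  next
    case 3
    have "{#p, q#} + Yr \<subseteq># {#p, q, r#} + Y"
      by (rule mset_subset_eq_mono_add[OF _ Yr(1)]) (simp add: insert_subset_eq_iff)
    then show ?thesis
    proof (rule exists_two_noncommuting_pairs_submset[OF ncY _ _ pq])
    qed (use Yr sums 3 in \<open>simp_all add: algebra_simps insert_subset_eq_iff\<close>)
  next
    case 4
    obtain yp where yp: "Yp = {#yp#}" "ha yp = ha p" "hb yp = hb p"
      by (rule singleton_of_sums_noncentral[OF 4(1) Yp(2,3) nc(1)])
    obtain yq where yq: "Yq = {#yq#}" "ha yq = ha q" "hb yq = hb q"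
      by (rule singleton_of_sums_noncentral[OF 4(2) Yq(2,3) nc(2)])
    obtain yr where yr: "Yr = {#yr#}" "ha yr = ha r" "hb yr = hb r"
      by (rule singleton_of_sums_noncentral[OF 4(3) Yr(2,3) nc(3)])
    have "yp \<noteq> yq" "yp \<noteq> yr" "yq \<noteq> yr"
      using pq pr qr yp yq yr heis_form_eq_0_if_same_ab by metis+
    then have "{#yp, yq, yr#} \<subseteq># Y"
      using Yp(1) Yq(1) Yr(1) yp(1) yq(1) yr(1) by (intro tripleton_subseteq) simp_all
    moreover have "sum_a {#yp, yq, yr#} = 0" "sum_b {#yp, yq, yr#} = 0"
      using sums yp yq yr by (simp_all add: add.assoc)
    ultimately have "\<exists>B. B \<subseteq># Y \<and> B \<noteq> {#} \<and> sum_a B = 0 \<and> sum_b B = 0"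
      by (intro exI[of _ "{#yp, yq, yr#}"] conjI) simp_all
    with free show ?thesis ..
  qed
qed

lemma two_noncommuting_pairs_extension:
  assumes pq: "heis_form p q \<noteq> 0" and pr: "heis_form p r \<noteq> 0" and qr: "heis_form q r \<noteq> 0"
    and sums: "ha p + ha q + ha r = 0" "hb p + hb q + hb r = 0"
    and Y: "size Y = 4" "\<forall>y\<in>#Y. \<not> heis_central y"
  shows "\<exists>B. B \<subseteq># {#p, q, r#} + Y \<and> sum_a B = 0 \<and> sum_b B = 0 \<and> two_noncommuting_pairs B"
proof (cases "\<exists>B'. B' \<subseteq># Y \<and> B' \<noteq> {#} \<and> sum_a B' = 0 \<and> sum_b B' = 0")
  case True
  then obtain B' where B': "B' \<subseteq># Y" "B' \<noteq> {#}" "sum_a B' = 0" "sum_b B' = 0" by blast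
  have nc: "\<forall>s\<in>#{#p, q, r#} + Y. \<not> heis_central s"
    using noncentral_if_heis_form_ne_0 pq qr Y(2) by auto
  have "{#p, q, r#} + B' \<subseteq># {#p, q, r#} + Y" using B'(1) by (rule subset_mset.add_left_mono)
  then show ?thesis
  proof (rule exists_two_noncommuting_pairs_submset[OF nc _ _ pq])
  qed (use B' sums in \<open>simp_all add: add.assoc insert_subset_eq_iff\<close>)
qed (use two_noncommuting_pairs_of_zero_sum_free assms in blast)

lemma product_one_heis_replicate:
  assumes "heis_central d" shows "product_one heis (replicate_mset 27 d)"
proof -
  have "heis_prod (replicate 27 d) = (0, 0, of_nat 27 * hc d)"
    using heis_prod_central[of "replicate 27 d"] assms by (simp add: sum_list_replicate)
  moreover have "(27::3) = 0" by simp
  ultimately show ?thesis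
    unfolding product_one_heis_iff by (intro conjI exI[of _ "replicate 27 d"]) simp_all
qed

lemma two_noncommuting_pairs_mono:
  "two_noncommuting_pairs A \<Longrightarrow> A \<subseteq># B \<Longrightarrow> two_noncommuting_pairs B"
  unfolding two_noncommuting_pairs_def using subset_mset.order_trans by blast

lemma heis_central_eqI: "heis_central c \<Longrightarrow> heis_central d \<Longrightarrow> hc c = hc d \<Longrightarrow> c = d"
  by (cases c, cases d) (simp add: heis_central_def)

text \<open>The exceptional configuration: 27 terms with vanishing \<open>a\<close>-, \<open>b\<close>- and \<open>\<psi>\<close>-sums, consisting
  of three pairwise non-commuting terms and 24 central ones; \<open>D\<close> holds the remaining terms.\<close>
context
  fixes x y r :: heis_elt and C :: "heis_elt multiset"
  assumes C_central: "\<forall>c\<in>#C. heis_central c" and size_C: "size C = 24"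
    and xy: "heis_form x y \<noteq> 0" and xr: "heis_form x r \<noteq> 0" and yr: "heis_form y r \<noteq> 0"
    and sum_a_xyr: "ha x + ha y + ha r = 0" and sum_b_xyr: "hb x + hb y + hb r = 0"
    and psi_zero: "sum_psi ({#x, y, r#} + C) = 0"
begin

text \<open>Exchanging a central term of \<open>C\<close> for a different central term changes the \<open>\<psi>\<close>-sum.\<close>
lemma exceptional_swap_central:
  assumes "heis_central d" "d \<in># D" "c \<in># C" "d \<noteq> c"
  shows "\<exists>S. S \<subseteq># {#x, y, r#} + C + D \<and> size S = 27 \<and> product_one heis S"
proof -
  obtain C0 where C0: "C = add_mset c C0" using multi_member_split[OF assms(3)] by blast
  let ?S = "{#x, y, r#} + add_mset d C0"
  have "sum_psi ?S = sum_psi ({#x, y, r#} + C) + heis_psi d - heis_psi c"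
    unfolding C0 by (simp add: algebra_simps)
  also have "\<dots> = hc d - hc c"
    using psi_zero assms(1,3) C_central by (simp add: heis_psi_def heis_central_def)
  finally have "sum_psi ?S = hc d - hc c" .
  moreover have "hc d \<noteq> hc c" using heis_central_eqI[of d c] assms(1,3,4) C_central by blast
  ultimately have "sum_psi ?S \<noteq> 0" by simp
  moreover have "\<forall>e\<in>#add_mset d C0. heis_central e" using assms(1) C_central C0 by auto
  ultimately have "product_one heis ?S"
    using sum_a_xyr sum_b_xyr xy by (intro product_one_heis_triangle) auto
  moreover have "add_mset d C0 \<subseteq># C + D" using assms(2) C0 by (simp add: subset_mset.add_mono)
  then have "?S \<subseteq># {#x, y, r#} + C + D" by (simp add: add.assoc subset_mset.add_left_mono)
  moreover have "size ?S = 27" using size_C C0 by simp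
  ultimately show ?thesis by (intro exI[of _ ?S] conjI)
qed

lemma exceptional_four_noncentral:
  assumes "Y \<subseteq># D" "size Y = 4" "\<forall>s\<in>#Y. \<not> heis_central s"
  shows "\<exists>S. S \<subseteq># {#x, y, r#} + C + D \<and> size S = 27 \<and> product_one heis S"
proof -
  obtain B where B: "B \<subseteq># {#x, y, r#} + Y" "sum_a B = 0" "sum_b B = 0" "two_noncommuting_pairs B"
    using two_noncommuting_pairs_extension[OF xy xr yr sum_a_xyr sum_b_xyr assms(2,3)] by blast
  have "size B \<le> 7" using size_mset_mono[OF B(1)] assms(2) by simp
  obtain p1 q1 p2 q2 where "{#p1, q1, p2, q2#} \<subseteq># B"
    using B(4) unfolding two_noncommuting_pairs_def by blast
  then have "4 \<le> size B" using size_mset_mono by fastforce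
  then have "27 - size B \<le> size C" using size_C by simp
  then obtain C' where C': "C' \<subseteq># C" "size C' = 27 - size B" using exists_submset_size by blast
  have "\<forall>c\<in>#C'. heis_central c" using C'(1) C_central by (auto dest: mset_subset_eqD)
  then have prod: "product_one heis (B + C')"
    using B sum_a_central sum_b_central two_noncommuting_pairs_mono[OF B(4)]
    by (intro product_one_heis_two_pairs) auto
  have "B + C' \<subseteq># ({#x, y, r#} + Y) + C" using B(1) C'(1) by (rule subset_mset.add_mono)
  also have "\<dots> \<subseteq># {#x, y, r#} + C + D"
    using subset_mset.add_left_mono[OF assms(1), of "{#x, y, r#} + C"] by (simp add: ac_simps)
  finally have "B + C' \<subseteq># {#x, y, r#} + C + D" .
  moreover have "size (B + C') = 27" using C'(2) \<open>size B \<le> 7\<close> by simp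
  ultimately show ?thesis using prod by (intro exI[of _ "B + C'"] conjI)
qed

lemma exceptional_all_equal:
  assumes "Dc \<subseteq># D" "3 \<le> size Dc" "\<forall>d\<in>#Dc. \<forall>c\<in>#C. d = c"
  shows "\<exists>S. S \<subseteq># {#x, y, r#} + C + D \<and> size S = 27 \<and> product_one heis S"
proof -
  have "C \<noteq> {#}" "Dc \<noteq> {#}" using size_C assms(2) by auto
  obtain c0 where c0: "c0 \<in># C" by (rule multiset_nonemptyE[OF \<open>C \<noteq> {#}\<close>])
  obtain d0 where d0: "d0 \<in># Dc" by (rule multiset_nonemptyE[OF \<open>Dc \<noteq> {#}\<close>])
  have d0c: "d0 = c" if "c \<in># C" for c using assms(3) d0 that by blast
  have "set_mset C \<subseteq> {c0}" using d0c d0c[OF c0] by auto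
  then have "C = replicate_mset 24 c0" using set_mset_subset_singletonD size_C by metis
  then have "count C c0 = 24" by simp
  moreover have "set_mset Dc \<subseteq> {c0}" using assms(3) c0 by blast
  then have "Dc = replicate_mset (size Dc) c0" by (rule set_mset_subset_singletonD)
  then have "count Dc c0 = size Dc" by (metis count_replicate_mset)
  ultimately have "replicate_mset 27 c0 \<subseteq># C + Dc"
    using assms(2) by (simp add: count_le_replicate_mset_subset_eq[symmetric])
  moreover have "C + Dc \<subseteq># C + D" using assms(1) by (rule subset_mset.add_left_mono)
  then have "C + Dc \<subseteq># {#x, y, r#} + C + D"
    using mset_subset_eq_add_right[of "C + D" "{#x, y, r#}"] unfolding add.assoc
    by (rule subset_mset.order_trans)
  ultimately have "replicate_mset 27 c0 \<subseteq># {#x, y, r#} + C + D" by (rule subset_mset.order_trans)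
  moreover have "product_one heis (replicate_mset 27 c0)"
    using c0 C_central by (intro product_one_heis_replicate) blast
  ultimately show ?thesis by (intro exI[of _ "replicate_mset 27 c0"]) simp
qed

lemma exceptional_gao:
  assumes "size D = 6"
  shows "\<exists>S. S \<subseteq># {#x, y, r#} + C + D \<and> size S = 27 \<and> product_one heis S"
proof -
  define Dc where "Dc = filter_mset heis_central D"
  define Dn where "Dn = filter_mset (\<lambda>s. \<not> heis_central s) D"
  have "D = Dc + Dn" unfolding Dc_def Dn_def by (rule multiset_partition)
  then have "size Dc + size Dn = 6" using arg_cong[of _ _ size] assms by force
  then consider (swap_central) d c where "d \<in># Dc" "c \<in># C" "d \<noteq> c" | (four_noncentral) "4 \<le> size Dn"
    | (all_equal) "\<forall>d\<in>#Dc. \<forall>c\<in>#C. d = c" "3 \<le> size Dc" by force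
  then show ?thesis
  proof cases
    case swap_central
    then show ?thesis by (intro exceptional_swap_central) (simp_all add: Dc_def)
  next
    case four_noncentral
    then obtain Y where "Y \<subseteq># Dn" "size Y = 4" using exists_submset_size by blast
    moreover have "Dn \<subseteq># D" unfolding Dn_def by (rule multiset_filter_subset)
    ultimately have "Y \<subseteq># D" using subset_mset.order_trans by blast
    moreover have "\<forall>s\<in>#Y. \<not> heis_central s"
      using \<open>Y \<subseteq># Dn\<close> unfolding Dn_def by (auto dest: mset_subset_eqD)
    ultimately show ?thesis using \<open>size Y = 4\<close> exceptional_four_noncentral by blast
  next
    case all_equal
    moreover have "Dc \<subseteq># D" unfolding Dc_def by (rule multiset_filter_subset)
    ultimately show ?thesis using exceptional_all_equal by blast
  qed
qed

end

theorem heis_gao_33: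
  assumes "size M = 33"
  shows "\<exists>S. S \<subseteq># M \<and> size S = 27 \<and> product_one heis S"
proof -
  obtain T where T: "T \<subseteq># M" "size T = 27" "sum_a T = 0" "sum_b T = 0" "sum_psi T = 0"
    using F3_zero_sums_submset_27[OF assms, of "\<lambda>s. ha s" "\<lambda>s. hb s" heis_psi] by blast
  consider "two_noncommuting_pairs T" | "pairwise_commuting T"
    | x y where "x \<in># T" "y \<in># T" "heis_form x y \<noteq> 0" "\<not> two_noncommuting_pairs T"
    unfolding pairwise_commuting_def by blast
  then show ?thesis
  proof cases
    case 1
    then show ?thesis using T product_one_heis_two_pairs by blast
  next
    case 2
    moreover have "T \<noteq> {#}" using T(2) by auto
    ultimately show ?thesis using T product_one_heis_commuting by blast
  next
    case (3 x y)
    then have "{#x, y#} \<subseteq># T" by (intro doubleton_subseteq) auto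
    then obtain r C where rC: "T = {#x, y, r#} + C" "\<forall>c\<in>#C. heis_central c"
      "heis_form x r \<noteq> 0" "heis_form y r \<noteq> 0"
      using noncommuting_pair_decomp[OF T(3,4) 3(4) _ 3(3)] by blast
    have "ha x + ha y + ha r = 0" "hb x + hb y + hb r = 0"
      using T(3,4) sum_a_central[OF rC(2)] sum_b_central[OF rC(2)] unfolding rC(1)
      by (simp_all add: add.assoc)
    moreover have "size C = 24" using T(2) rC(1) by simp
    moreover have "M = T + (M - T)" using T(1) by simp
    moreover have "size (M - T) = 6" using T(1,2) assms by (simp add: size_Diff_submset)
    ultimately show ?thesis
      using exceptional_gao[OF rC(2) _ 3(3) rC(3,4)] T(5) unfolding rC(1) by metis
  qed
qed


section \<open>Non-abelian groups of exponent 3\<close>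

context group
begin

lemma exp3_cube:
  assumes "\<forall>g\<in>carrier G. g [^] (3::nat) = \<one>" "a \<in> carrier G"
  shows "a \<otimes> a \<otimes> a = \<one>"
proof -
  have "a [^] (3::nat) = a \<otimes> a \<otimes> a" using assms(2) by (simp add: numeral_3_eq_3)
  then show ?thesis using assms by simp
qed

lemma exp3_inv_eq_square:
  assumes "\<forall>g\<in>carrier G. g [^] (3::nat) = \<one>" "a \<in> carrier G"
  shows "inv a = a \<otimes> a"
  by (rule inv_equality) (use exp3_cube[OF assms] assms(2) in auto)

lemma exp3_square_of_mult:
  assumes "\<forall>g\<in>carrier G. g [^] (3::nat) = \<one>" "c \<in> carrier G" "d \<in> carrier G"
  shows "c \<otimes> d \<otimes> c \<otimes> d = inv d \<otimes> inv c"
proof -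
  have "inv (c \<otimes> d) = (c \<otimes> d) \<otimes> (c \<otimes> d)"
    using exp3_inv_eq_square[OF assms(1)] assms(2,3) by simp
  then show ?thesis using assms(2,3) by (simp add: inv_mult_group m_assoc)
qed

text \<open>Groups of exponent 3 are 2-Engel.\<close>
lemma exp3_commute_conjugate:
  assumes exp3: "\<forall>g\<in>carrier G. g [^] (3::nat) = \<one>" and a: "a \<in> carrier G" and b: "b \<in> carrier G"
  shows "a \<otimes> (b \<otimes> a \<otimes> inv b) = (b \<otimes> a \<otimes> inv b) \<otimes> a"
proof -
  have "a \<otimes> b \<otimes> a = (a \<otimes> b \<otimes> a \<otimes> b) \<otimes> inv b" using a b by (simp add: m_assoc)
  also have "\<dots> = inv b \<otimes> inv a \<otimes> inv b" using exp3_square_of_mult[OF exp3 a b] by simp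
  finally have aba: "a \<otimes> b \<otimes> a = inv b \<otimes> inv a \<otimes> inv b" .
  have "a \<otimes> inv b \<otimes> a = (a \<otimes> inv b \<otimes> a \<otimes> inv b) \<otimes> b" using a b by (simp add: m_assoc)
  also have "\<dots> = b \<otimes> inv a \<otimes> b" using exp3_square_of_mult[OF exp3 a inv_closed[OF b]] b by simp
  finally have abia: "a \<otimes> inv b \<otimes> a = b \<otimes> inv a \<otimes> b" .
  have "inv b \<otimes> inv b = b \<otimes> (b \<otimes> b \<otimes> b)"
    using exp3_inv_eq_square[OF exp3 b] b by (simp add: m_assoc)
  then have ibib: "inv b \<otimes> inv b = b" using exp3_cube[OF exp3 b] b by simp
  have bb: "b \<otimes> b = inv b" using exp3_inv_eq_square[OF exp3 b] by simp
  have "a \<otimes> (b \<otimes> a \<otimes> inv b) = (a \<otimes> b \<otimes> a) \<otimes> inv b" using a b by (simp add: m_assoc)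
  also have "\<dots> = inv b \<otimes> inv a \<otimes> (inv b \<otimes> inv b)" unfolding aba using a b by (simp add: m_assoc)
  also have "\<dots> = (b \<otimes> b) \<otimes> inv a \<otimes> b" unfolding ibib bb ..
  also have "\<dots> = b \<otimes> (a \<otimes> inv b \<otimes> a)" unfolding abia using a b by (simp add: m_assoc)
  also have "\<dots> = (b \<otimes> a \<otimes> inv b) \<otimes> a" using a b by (simp add: m_assoc)
  finally show ?thesis .
qed

end

locale exp3_noncomm_group = group G for G (structure) +
  fixes x y
  assumes exp3: "\<forall>g\<in>carrier G. g [^] (3::nat) = \<one>"
    and x_closed [simp]: "x \<in> carrier G" and y_closed [simp]: "y \<in> carrier G"
    and noncomm: "x \<otimes> y \<noteq> y \<otimes> x"
begin

definition z :: 'a where "z = y \<otimes> x \<otimes> inv y \<otimes> inv x"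

lemma z_closed [simp]: "z \<in> carrier G"
  unfolding z_def by simp

lemma z_x_commute: "z \<otimes> x = x \<otimes> z"
proof -
  define u where "u = y \<otimes> x \<otimes> inv y"
  have uc: "u \<in> carrier G" unfolding u_def by simp
  have e: "x \<otimes> u = u \<otimes> x" unfolding u_def by (rule exp3_commute_conjugate[OF exp3]) simp_all
  have "x \<otimes> z = (x \<otimes> u) \<otimes> inv x" unfolding z_def u_def by (simp add: m_assoc)
  also have "\<dots> = u" unfolding e using uc by (simp add: m_assoc)
  also have "\<dots> = z \<otimes> x" unfolding z_def u_def by (simp add: m_assoc)
  finally show ?thesis by simp
qed

lemma z_y_commute: "z \<otimes> y = y \<otimes> z"
proof -
  define v where "v = x \<otimes> y \<otimes> inv x"
  have vc: "v \<in> carrier G" unfolding v_def by simp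
  have e: "y \<otimes> v = v \<otimes> y" unfolding v_def by (rule exp3_commute_conjugate[OF exp3]) simp_all
  have "inv v \<otimes> y = inv v \<otimes> (y \<otimes> v) \<otimes> inv v" using vc by (simp add: m_assoc)
  also have "\<dots> = inv v \<otimes> (v \<otimes> y) \<otimes> inv v" using e by simp
  also have "\<dots> = y \<otimes> inv v" using vc by (simp add: m_assoc[symmetric])
  finally have e': "y \<otimes> inv v = inv v \<otimes> y" by simp
  have zv: "z = y \<otimes> inv v" unfolding z_def v_def by (simp add: inv_mult_group m_assoc)
  have "y \<otimes> z = y \<otimes> (inv v \<otimes> y)" unfolding zv e' ..
  also have "\<dots> = z \<otimes> y" unfolding zv using vc by (simp add: m_assoc)
  finally show ?thesis by simp
qed

lemma y_mult_x: "y \<otimes> x = x \<otimes> y \<otimes> z"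
proof -
  have "x \<otimes> y \<otimes> z = x \<otimes> (z \<otimes> y)" by (simp add: z_y_commute m_assoc)
  also have "\<dots> = z \<otimes> x \<otimes> y" by (simp add: z_x_commute m_assoc[symmetric])
  also have "\<dots> = y \<otimes> x" unfolding z_def by (simp add: m_assoc)
  finally show ?thesis by simp
qed

lemma z_ne_one: "z \<noteq> \<one>"
proof
  assume "z = \<one>"
  then have "y \<otimes> x = x \<otimes> y" using y_mult_x by simp
  then show False using noncomm by simp
qed

lemma z_pow_x: "z [^] (k::nat) \<otimes> x [^] (n::nat) = x [^] n \<otimes> z [^] k"
proof -
  have "z [^] k \<otimes> x = x \<otimes> z [^] k" by (rule group_commutes_pow[OF z_x_commute]) simp_all
  then have "x \<otimes> z [^] k = z [^] k \<otimes> x" by simp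
  then have "x [^] n \<otimes> z [^] k = z [^] k \<otimes> x [^] n" by (rule group_commutes_pow) simp_all
  then show ?thesis by simp
qed

lemma z_pow_y: "z [^] (k::nat) \<otimes> y [^] (n::nat) = y [^] n \<otimes> z [^] k"
proof -
  have "z [^] k \<otimes> y = y \<otimes> z [^] k" by (rule group_commutes_pow[OF z_y_commute]) simp_all
  then have "y \<otimes> z [^] k = z [^] k \<otimes> y" by simp
  then have "y [^] n \<otimes> z [^] k = z [^] k \<otimes> y [^] n" by (rule group_commutes_pow) simp_all
  then show ?thesis by simp
qed

lemma z_pow_x_pow_assoc: "u \<in> carrier G \<Longrightarrow> z [^] (k::nat) \<otimes> (x [^] (n::nat) \<otimes> u) = x [^] n \<otimes> (z [^] k \<otimes> u)"
  by (simp add: m_assoc[symmetric] z_pow_x)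

lemma z_pow_y_pow_assoc: "u \<in> carrier G \<Longrightarrow> z [^] (k::nat) \<otimes> (y [^] (n::nat) \<otimes> u) = y [^] n \<otimes> (z [^] k \<otimes> u)"
  by (simp add: m_assoc[symmetric] z_pow_y)

lemma y_mult_x_pow: "y \<otimes> x [^] (n::nat) = x [^] n \<otimes> y \<otimes> z [^] n"
proof (induct n)
  case 0 then show ?case by simp
next
  case (Suc n)
  have "y \<otimes> x [^] Suc n = (y \<otimes> x [^] n) \<otimes> x" by (simp add: m_assoc)
  also have "\<dots> = x [^] n \<otimes> y \<otimes> (z [^] n \<otimes> x)" unfolding Suc by (simp add: m_assoc)
  also have "\<dots> = x [^] n \<otimes> (y \<otimes> x) \<otimes> z [^] n" using z_pow_x[of n 1] by (simp add: m_assoc)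
  also have "\<dots> = x [^] n \<otimes> x \<otimes> y \<otimes> (z \<otimes> z [^] n)" unfolding y_mult_x by (simp add: m_assoc)
  also have "\<dots> = x [^] Suc n \<otimes> y \<otimes> z [^] Suc n" by (simp add: nat_pow_Suc2[symmetric])
  finally show ?case .
qed

lemma y_pow_mult_x_pow: "y [^] (m::nat) \<otimes> x [^] (n::nat) = x [^] n \<otimes> y [^] m \<otimes> z [^] (m * n)"
proof (induct m)
  case 0 then show ?case by simp
next
  case (Suc m)
  have "y [^] Suc m \<otimes> x [^] n = y [^] m \<otimes> (y \<otimes> x [^] n)" by (simp add: m_assoc)
  also have "\<dots> = (y [^] m \<otimes> x [^] n) \<otimes> y \<otimes> z [^] n" unfolding y_mult_x_pow by (simp add: m_assoc)
  also have "\<dots> = x [^] n \<otimes> y [^] m \<otimes> (z [^] (m * n) \<otimes> y) \<otimes> z [^] n" unfolding Suc by (simp add: m_assoc)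
  also have "\<dots> = x [^] n \<otimes> y [^] m \<otimes> y \<otimes> (z [^] (m * n) \<otimes> z [^] n)" using z_pow_y[of "m*n" 1] by (simp add: m_assoc)
  also have "\<dots> = x [^] n \<otimes> y [^] Suc m \<otimes> z [^] (Suc m * n)" by (simp add: nat_pow_mult add.commute m_assoc)
  finally show ?case .
qed

definition xyz_pow :: "nat \<Rightarrow> nat \<Rightarrow> nat \<Rightarrow> 'a" where
  "xyz_pow i j k = x [^] i \<otimes> y [^] j \<otimes> z [^] k"

lemma xyz_pow_closed [simp]: "xyz_pow i j k \<in> carrier G" unfolding xyz_pow_def by simp

lemma xyz_pow_mult: "xyz_pow i j k \<otimes> xyz_pow i' j' k' = xyz_pow (i + i') (j + j') (k + k' + j * i')"
proof -
  have "xyz_pow i j k \<otimes> xyz_pow i' j' k' = x [^] i \<otimes> (y [^] j \<otimes> x [^] i') \<otimes> (z [^] k \<otimes> (y [^] j' \<otimes> z [^] k'))"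
    unfolding xyz_pow_def by (simp add: m_assoc z_pow_x_pow_assoc)
  also have "\<dots> = x [^] i \<otimes> (x [^] i' \<otimes> y [^] j \<otimes> z [^] (j * i')) \<otimes> (y [^] j' \<otimes> (z [^] k \<otimes> z [^] k'))"
    unfolding y_pow_mult_x_pow by (simp add: z_pow_y_pow_assoc)
  also have "\<dots> = x [^] i \<otimes> x [^] i' \<otimes> y [^] j \<otimes> (z [^] (j * i') \<otimes> y [^] j') \<otimes> (z [^] k \<otimes> z [^] k')"
    by (simp add: m_assoc)
  also have "\<dots> = x [^] i \<otimes> x [^] i' \<otimes> (y [^] j \<otimes> y [^] j') \<otimes> (z [^] (j * i') \<otimes> (z [^] k \<otimes> z [^] k'))"
    unfolding z_pow_y by (simp add: m_assoc)
  also have "\<dots> = xyz_pow (i + i') (j + j') (k + k' + j * i')"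
    unfolding xyz_pow_def by (simp add: nat_pow_mult add.commute add.left_commute)
  finally show ?thesis .
qed

lemma pow_mod_3: "g \<in> carrier G \<Longrightarrow> g [^] (n::nat) = g [^] (n mod 3)"
proof -
  assume g: "g \<in> carrier G"
  have "g [^] n = g [^] (3 * (n div 3) + n mod 3)" by simp
  also have "\<dots> = g [^] (3 * (n div 3)) \<otimes> g [^] (n mod 3)" by (rule nat_pow_mult[OF g, symmetric])
  also have "\<dots> = (g [^] (3::nat)) [^] (n div 3) \<otimes> g [^] (n mod 3)"
    using g by (simp add: nat_pow_pow)
  also have "\<dots> = g [^] (n mod 3)" using exp3 g by simp
  finally show ?thesis .
qed

lemma xyz_pow_mod_3: "xyz_pow i j k = xyz_pow (i mod 3) (j mod 3) (k mod 3)"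
  unfolding xyz_pow_def using pow_mod_3[of x i] pow_mod_3[of y j] pow_mod_3[of z k] by simp

end

definition F3_rep :: "3 \<Rightarrow> nat" where
  "F3_rep k = (if k = 0 then 0 else if k = 1 then 1 else 2)"

lemma F3_rep_add: "F3_rep (a + b) = (F3_rep a + F3_rep b) mod 3"
  and F3_rep_mult: "F3_rep (a * b) = (F3_rep a * F3_rep b) mod 3"
  using F3_cases[of a] F3_cases[of b] by (auto simp: F3_rep_def)

context exp3_noncomm_group
begin

definition heis_embed :: "heis_elt \<Rightarrow> 'a" where
  "heis_embed u = xyz_pow (F3_rep (ha u)) (F3_rep (hb u)) (F3_rep (hc u))"

lemma heis_embed_closed [simp]: "heis_embed u \<in> carrier G"
  by (simp add: heis_embed_def)

lemma heis_embed_mult: "heis_embed (heis_mult u v) = heis_embed u \<otimes> heis_embed v"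
proof -
  have "heis_embed u \<otimes> heis_embed v = xyz_pow (F3_rep (ha u) + F3_rep (ha v))
      (F3_rep (hb u) + F3_rep (hb v)) (F3_rep (hc u) + F3_rep (hc v) + F3_rep (hb u) * F3_rep (ha v))"
    unfolding heis_embed_def xyz_pow_mult ..
  also have "\<dots> = heis_embed (heis_mult u v)"
    by (subst xyz_pow_mod_3) (simp add: heis_embed_def heis_mult_def F3_rep_add F3_rep_mult mod_add_eq mod_mult_eq)
  finally show ?thesis by simp
qed

lemma heis_embed_hom: "heis_embed \<in> hom heis G"
  by (rule homI) (simp_all add: heis_def heis_embed_mult)

lemma heis_embed_zero [simp]: "heis_embed (0, 0, 0) = \<one>"
  by (simp add: heis_embed_def xyz_pow_def F3_rep_def)

lemma heis_embed_central: "heis_embed (0, 0, c) = z [^] F3_rep c"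
  by (simp add: heis_embed_def xyz_pow_def F3_rep_def)

lemma heis_embed_central_eq_one: "heis_embed (0, 0, c) = \<one> \<Longrightarrow> c = 0"
proof (rule ccontr)
  assume "heis_embed (0, 0, c) = \<one>" "c \<noteq> 0"
  then have "F3_rep c = 1 \<or> F3_rep c = 2" "z [^] F3_rep c = \<one>"
    by (auto simp: heis_embed_central F3_rep_def)
  then have "z = \<one> \<or> z \<otimes> z = \<one>" by (auto simp: numeral_2_eq_2)
  then show False using z_ne_one exp3_cube[OF exp3 z_closed] by auto
qed

text \<open>An element mapping to \<open>\<one>\<close> commutes with \<open>(1,0,0)\<close> and \<open>(0,1,0)\<close> in the image, but in
  \<open>heis\<close> these commutators are \<open>(0,0,b)\<close> and \<open>(0,0,-a)\<close>.\<close>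
lemma heis_embed_eq_one: "heis_embed u = \<one> \<Longrightarrow> u = (0, 0, 0)"
proof -
  assume u1: "heis_embed u = \<one>"
  obtain a b c where u: "u = (a, b, c)" by (cases u)
  have cancel: "heis_embed w = \<one>" if "heis_embed v = heis_embed (heis_mult v w)" for v w
    using that by (simp add: heis_embed_mult)
  have "heis_embed (heis_mult (1, 0, 0) u) = heis_embed (heis_mult u (1, 0, 0))"
    by (simp add: heis_embed_mult u1)
  also have "heis_mult u (1, 0, 0) = heis_mult (heis_mult (1, 0, 0) u) (0, 0, b)"
    unfolding u by (simp add: heis_mult_def algebra_simps)
  finally have b: "b = 0" by (intro heis_embed_central_eq_one cancel)
  have "heis_embed (heis_mult u (0, 1, 0)) = heis_embed (heis_mult (0, 1, 0) u)"
    by (simp add: heis_embed_mult u1)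
  also have "heis_mult (0, 1, 0) u = heis_mult (heis_mult u (0, 1, 0)) (0, 0, a)"
    unfolding u b by (simp add: heis_mult_def algebra_simps)
  finally have a: "a = 0" by (intro heis_embed_central_eq_one cancel)
  have "c = 0" using u1 heis_embed_central_eq_one unfolding u a b by simp
  with u a b show ?thesis by simp
qed

lemma heis_embed_iso:
  assumes "order G = 27" shows "heis_embed \<in> iso heis G"
proof -
  interpret heis_embed: group_hom heis G heis_embed
    by (intro group_hom.intro group_hom_axioms.intro group_heis is_group heis_embed_hom)
  have "kernel heis G heis_embed = {(0, 0, 0)}"
    using heis_embed_eq_one unfolding kernel_def by (auto simp: heis_def)
  then have inj: "inj heis_embed"
    using heis_embed.trivial_ker_imp_inj by (simp add: heis_def)
  have "finite (carrier G)" using assms unfolding order_def by (metis card.infinite zero_neq_numeral)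
  moreover have "card (heis_embed ` UNIV) = card (carrier G)"
    using card_image[OF inj] assms unfolding order_def by simp
  ultimately have "heis_embed ` UNIV = carrier G"
    by (intro card_subset_eq) (auto simp: heis_embed_def)
  with inj show ?thesis unfolding iso_def bij_betw_def using heis_embed_hom by (simp add: heis_def)
qed

end

lemma order_heis: "order heis = 27"
  by (simp add: order_def heis_def)

definition heis_free_sequence :: "heis_elt multiset" where
  "heis_free_sequence = {#(1, 0, 0), (1, 0, 0), (0, 1, 0), (0, 1, 0), (0, 0, 1), (0, 0, 1)#}"

lemma F3_of_nat_eq_0: "n \<le> 2 \<Longrightarrow> (of_nat n :: 3) = 0 \<Longrightarrow> n = 0"
  by (cases n) (auto simp: numeral_2_eq_2 le_Suc_eq)

lemma sum_a_sum_b_of_basis: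
  "set_mset B \<subseteq> {(1, 0, 0), (0, 1, 0), (0, 0, 1)} \<Longrightarrow>
    sum_a B = of_nat (count B (1, 0, 0)) \<and> sum_b B = of_nat (count B (0, 1, 0))"
  by (induct B) auto

text \<open>A product-one subsequence has zero \<open>a\<close>- and \<open>b\<close>-sums, so it avoids \<open>(1,0,0)\<close> and
  \<open>(0,1,0)\<close>; at most two copies of the central \<open>(0,0,1)\<close> have a nonzero product.\<close>
lemma product_one_free_heis_free_sequence: "product_one_free heis heis_free_sequence"
  unfolding product_one_free_def
proof
  assume "\<exists>S. S \<subseteq># heis_free_sequence \<and> product_one heis S"
  then obtain S xs where S: "S \<subseteq># heis_free_sequence" "S \<noteq> {#}" "mset xs = S" "heis_prod xs = (0, 0, 0)"
    unfolding product_one_heis_iff by blast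
  have count: "count S e \<le> 2" if "e \<in> {(1, 0, 0), (0, 1, 0), (0, 0, 1)}" for e
    using mset_subset_eq_count[OF S(1), of e] that by (auto simp: heis_free_sequence_def)
  have setS: "set_mset S \<subseteq> {(1, 0, 0), (0, 1, 0), (0, 0, 1)}"
    using set_mset_mono[OF S(1)] by (auto simp: heis_free_sequence_def)
  have "sum_a S = 0" "sum_b S = 0" using S(3,4) heis_prod_eq_one_iff by auto
  then have "count S (1, 0, 0) = 0" "count S (0, 1, 0) = 0"
    using sum_a_sum_b_of_basis[OF setS] count F3_of_nat_eq_0 by auto
  then have "set_mset S \<subseteq> {(0, 0, 1)}" using setS by (auto simp: count_eq_zero_iff)
  then have xs: "\<forall>c\<in>set xs. c = (0, 0, 1)" using S(3) by auto
  then have "(\<Sum>c\<leftarrow>xs. hc c) = of_nat (length xs)" by (induct xs) auto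
  moreover have "\<forall>c\<in>set xs. heis_central c" using xs by (auto simp: heis_central_def)
  ultimately have "heis_prod xs = (0, 0, of_nat (length xs))" using heis_prod_central by simp
  with S(3,4) have zero: "(of_nat (size S) :: 3) = 0" by auto
  have Sr: "S = replicate_mset (size S) (0, 0, 1)"
    using \<open>set_mset S \<subseteq> {(0, 0, 1)}\<close> by (rule set_mset_subset_singletonD)
  have "count S (0, 0, 1) = size S" by (subst (1) Sr) simp
  then have "size S \<le> 2" using count[of "(0, 0, 1)"] by simp
  with zero have "size S = 0" using F3_of_nat_eq_0 by blast
  with S(2) show False by simp
qed

theorem theorem3p5:
  fixes G :: "('a, 'b) monoid_scheme"
  assumes "group G"
    and "order G = 27"
    and "\<forall>x\<in>carrier G. x [^]\<^bsub>G\<^esub> (3::nat) = \<one>\<^bsub>G\<^esub>"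
    and "\<exists>x\<in>carrier G. \<exists>y\<in>carrier G. x \<otimes>\<^bsub>G\<^esub> y \<noteq> y \<otimes>\<^bsub>G\<^esub> x"
  shows "(\<forall>M. seq_over G M \<and> size M = 33 \<longrightarrow>
            (\<exists>S. S \<subseteq># M \<and> size S = 27 \<and> product_one G S))
         \<and> gao_constant G = 33
         \<and> gao_constant G = small_davenport G + order G"
proof -
  obtain x y where xy: "x \<in> carrier G" "y \<in> carrier G" "x \<otimes>\<^bsub>G\<^esub> y \<noteq> y \<otimes>\<^bsub>G\<^esub> x"
    using assms(4) by blast
  interpret exp3_noncomm_group G x y
    by (rule exp3_noncomm_group.intro[OF assms(1)], unfold_locales) (use assms(3) xy in auto)
  have iso: "heis_embed \<in> iso heis G" using heis_embed_iso assms(2) .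
  have fin: "finite (carrier G)" using assms(2) order_gt_0_iff_finite by simp
  have "gao_property heis 33" using heis_gao_33 order_heis by (intro gao_propertyI) simp
  then have gao: "gao_property G 33" using gao_property_iso[OF group_heis assms(1) iso] by blast
  let ?M6 = "image_mset heis_embed heis_free_sequence"
  have M6: "seq_over G ?M6" "product_one_free G ?M6" "size ?M6 = 6"
    using product_one_free_iso[OF group_heis assms(1) iso _ product_one_free_heis_free_sequence]
    by (auto simp: seq_over_def heis_def heis_free_sequence_def)
  have "\<not> gao_property G 32"
    using not_gao_property_of_product_one_free[OF fin M6(1,2)] M6(3) assms(2) by simp
  with gao have "gao_constant G = 33" using gao_constant_eqI[of G 32] by simp
  moreover have "small_davenport G = 6"
    using small_davenport_eqI[OF M6(1,2)] product_one_free_size_bound[OF fin gao] M6(3) assms(2)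
    by simp
  moreover have "\<forall>M. seq_over G M \<and> size M = 33 \<longrightarrow> (\<exists>S. S \<subseteq># M \<and> size S = 27 \<and> product_one G S)"
    using gao assms(2) unfolding gao_property_def by simp
  ultimately show ?thesis using assms(2) by simp
qed

end
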